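(* Let $\mathcal{I}=\{1,\dots,m\}$. For each $i\in\mathcal{I}$ let $\mathcal{H}_i$ be a finite-dimensional real Hilbert space, let $\boldsymbol{\mathcal{H}}:=\mathcal{H}_1\times\cdots\times\mathcal{H}_m$ (with the product inner product), and let $\mathcal{G}$ be a finite-dimensional real Hilbert space. Let $C_i\subset\mathcal{H}_i$ ($i\in\mathcal{I}$) and $D\subset\mathcal{G}$ be nonempty closed convex sets, and let $\boldsymbol{L}:\boldsymbol{\mathcal{H}}\to\mathcal{G}$ be linear. For each $i\in\mathcal{I}$ let $\boldsymbol{f}_i:\boldsymbol{\mathcal{H}}\to\mathbb{R}$ be such that $\boldsymbol{f}_i(\cdot;\boldsymbol{x}_{\smallsetminus i}):\mathcal{H}_i\to\mathbb{R}$ is convex and differentiable for every $\boldsymbol{x}\in\boldsymbol{\mathcal{H}}$, and define $\boldsymbol{G}(\boldsymbol{x}):=(\nabla_1\boldsymbol{f}_1(\boldsymbol{x}),\dots,\nabla_m\boldsymbol{f}_m(\boldsymbol{x}))$. Assume $\boldsymbol{G}$ is monotone and $\kappa_{\boldsymbol{G}}$-Lipschitzian for some $\kappa_{\boldsymbol{G}}>0$. Let $\boldsymbol{\mathfrak{C}}:=\{\boldsymbol{x}\in C_1\times\cdots\times C_m\mid\boldsymbol{L}\boldsymbol{x}\in D\}$ and $\boldsymbol{\mathcal{V}}:=\{\boldsymbol{v}\in\boldsymbol{\mathfrak{C}}\mid\langle\boldsymbol{G}(\boldsymbol{v}),\boldsymbol{w}-\boldsymbol{v}\rangle\ge0\ \forall\boldsymbol{w}\in\boldsymbol{\mathfrak{C}}\}$,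 and assume $\boldsymbol{\mathcal{V}}\ne\varnothing$. For each $i\in\mathcal{I}$ let $f^{\langle u\rangle}_i:\boldsymbol{\mathcal{H}}\to\mathbb{R}$ be such that $f^{\langle u\rangle}_i(\cdot;\boldsymbol{x}_{\smallsetminus i})$ is convex and differentiable for every $\boldsymbol{x}\in\boldsymbol{\mathcal{H}}$, define $\boldsymbol{\mathfrak{G}}^{\langle u\rangle}(\boldsymbol{x}):=(\nabla_1 f^{\langle u\rangle}_1(\boldsymbol{x}),\dots,\nabla_m f^{\langle u\rangle}_m(\boldsymbol{x}))$ and $\boldsymbol{\mathcal{V}}^{\langle u\rangle}:=\{\boldsymbol{x}\in\boldsymbol{\mathcal{V}}\mid\langle\boldsymbol{\mathfrak{G}}^{\langle u\rangle}(\boldsymbol{x}),\boldsymbol{y}-\boldsymbol{x}\rangle\ge0\ \forall\boldsymbol{y}\in\boldsymbol{\mathcal{V}}\}$. Let $\gamma\in(0,1/(\kappa_{\boldsymbol{G}}+\|\boldsymbol{L}\|_{\mathrm{op}}))$, $\alpha\in(0,1)$, and define on $\boldsymbol{\mathcal{H}}\times\mathcal{G}$: $\boldsymbol{A}(\boldsymbol{x},u):=(\boldsymbol{G}(\boldsymbol{x})+\boldsymbol{L}^*u,-\boldsymbol{L}\boldsymbol{x})$, $\boldsymbol{B}(\boldsymbol{x},u):=\big(N_{C_1}(x_1)\times\cdots\times N_{C_m}(x_m)\big)\times\partial\iota_D^*(u)$, $\boldsymbol{T}_{\mathrm{FBF}}:=(\mathrm{Id}-\gamma\boldsymbol{A})\circ(\mathrm{Id}+\gamma\boldsymbol{B})^{-1}\circ(\mathrm{Id}-\gamma\boldsymbol{A})+\gamma\boldsymbol{A}$,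 $\boldsymbol{T}_\alpha:=(1-\alpha)\mathrm{Id}+\alpha\boldsymbol{T}_{\mathrm{FBF}}$, and $\boldsymbol{\mathfrak{G}}^{\langle u\rangle}_{\mathrm{FBF}}(\boldsymbol{x},u):=(\boldsymbol{\mathfrak{G}}^{\langle u\rangle}(\boldsymbol{x}),\boldsymbol{0}_{\mathcal{G}})$. Let $(\lambda_n)_{n\in\mathbb{N}}\subset[0,\infty)$ satisfy $\lim_{n\to\infty}\lambda_n=0$ and $\sum_{n\in\mathbb{N}}\lambda_n=\infty$. Given $\boldsymbol{\xi}_0\in\boldsymbol{\mathcal{H}}\times\mathcal{G}$, define $$\boldsymbol{\xi}_{n+1}=\boldsymbol{T}_\alpha(\boldsymbol{\xi}_n)-\lambda_{n+1}\boldsymbol{\mathfrak{G}}^{\langle u\rangle}_{\mathrm{FBF}}(\boldsymbol{T}_\alpha(\boldsymbol{\xi}_n))\quad(n\in\mathbb{N}),$$ and write $\boldsymbol{\xi}_n=(\boldsymbol{x}_n,u_n)$. Assume: (i) $\boldsymbol{\mathfrak{G}}^{\langle u\rangle}$ is Lipschitzian and paramonotone, i.e., monotone and, for all $\boldsymbol{x},\boldsymbol{y}$, $\langle\boldsymbol{\mathfrak{G}}^{\langle u\rangle}(\boldsymbol{x})-\boldsymbol{\mathfrak{G}}^{\langle u\rangle}(\boldsymbol{y}),\boldsymbol{x}-\boldsymbol{y}\rangle=0$ iff $\boldsymbol{\mathfrak{G}}^{\langle u\rangle}(\boldsymbol{x})=\boldsymbol{\mathfrak{G}}^{\langle u\rangle}(\boldsymbol{y})$;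 (ii) $\mathrm{Fix}(\boldsymbol{T}_\alpha)$ is bounded; (iii) the sequence $(\boldsymbol{\xi}_n)_{n\in\mathbb{N}}$ is bounded. Then $\lim_{n\to\infty}d(\boldsymbol{x}_n,\boldsymbol{\mathcal{V}}^{\langle u\rangle})=0$, where $d(\boldsymbol{x},\boldsymbol{\mathcal{V}}^{\langle u\rangle}):=\inf_{\boldsymbol{y}\in\boldsymbol{\mathcal{V}}^{\langle u\rangle}}\|\boldsymbol{y}-\boldsymbol{x}\|$.
   Context: For $\boldsymbol{x}=(x_1,\dots,x_m)\in\boldsymbol{\mathcal{H}}$, $\boldsymbol{x}_{\smallsetminus i}$ denotes the components other than the $i$-th, and $(y;\boldsymbol{x}_{\smallsetminus i})$ denotes $\boldsymbol{x}$ with its $i$-th component replaced by $y\in\mathcal{H}_i$; $\nabla_i\boldsymbol{f}_i(\boldsymbol{x})$ (resp. $\nabla_i f^{\langle u\rangle}_i(\boldsymbol{x})$) is the gradient at $x_i$ of $\boldsymbol{f}_i(\cdot;\boldsymbol{x}_{\smallsetminus i})$ (resp. $f^{\langle u\rangle}_i(\cdot;\boldsymbol{x}_{\smallsetminus i})$). $N_C$ denotes the normal cone of a closed convex set $C$, $\iota_D^*$ the convex conjugate of the indicator function of $D$, $\partial$ the subdifferential, $\boldsymbol{L}^*$ the adjoint, $\|\cdot\|_{\mathrm{op}}$ the operator norm, and $\mathrm{Fix}(T)$ the fixed point set of $T$. The set $\boldsymbol{\mathcal{V}}^{\langle u\rangle}$ is the solution set of the variational inequality over the variational equilibria $\boldsymbol{\mathcal{V}}$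 associated with the upper-level game in which player $i$ minimizes $f^{\langle u\rangle}_i(\cdot;\boldsymbol{x}_{\smallsetminus i})$ over $\boldsymbol{\mathcal{V}}$. *)

theory Defs
  imports "HOL-Analysis.Analysis"
begin

text \<open>The product space H = H_1 x ... x H_m is modelled as a finite-dimensional
real inner product space 'a together with a family of orthogonal projections
P i (i = 1..m) onto mutually orthogonal subspaces H_i = range (P i) summing to
the whole space. Component i of x is P i x, and (y; x without i) is x - P i x + y.\<close>

definition orth_decomp :: "nat \<Rightarrow> (nat \<Rightarrow> 'a::euclidean_space \<Rightarrow> 'a) \<Rightarrow> bool" where
  "orth_decomp m P \<longleftrightarrow>
     (\<forall>i\<in>{1..m}. linear (P i) \<and> (\<forall>x. P i (P i x) = P i x) \<and>
                 (\<forall>x y. P i x \<bullet> y = x \<bullet> P i y)) \<and>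
     (\<forall>i\<in>{1..m}. \<forall>j\<in>{1..m}. i \<noteq> j \<longrightarrow> (\<forall>x. P i (P j x) = 0)) \<and>
     (\<forall>x. (\<Sum>i\<in>{1..m}. P i x) = x)"

definition repl :: "('a::real_vector \<Rightarrow> 'a) \<Rightarrow> 'a \<Rightarrow> 'a \<Rightarrow> 'a" where
  "repl Q x y = x - Q x + y"

text \<open>Gradient at x_i of f(.; x without i) as a function on H_i = range Q.\<close>
definition partial_grad :: "('a::euclidean_space \<Rightarrow> 'a) \<Rightarrow> ('a \<Rightarrow> real) \<Rightarrow> 'a \<Rightarrow> 'a" where
  "partial_grad Q f x = (SOME g. g \<in> range Q \<and>
      ((\<lambda>z. f (repl Q x z)) has_derivative (\<lambda>h. g \<bullet> h)) (at (Q x) within range Q))"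

text \<open>Pseudo-gradient (nabla_1 f_1(x), ..., nabla_m f_m(x)), embedded in the product space.\<close>
definition pseudo_grad :: "nat \<Rightarrow> (nat \<Rightarrow> 'a::euclidean_space \<Rightarrow> 'a) \<Rightarrow> (nat \<Rightarrow> 'a \<Rightarrow> real) \<Rightarrow> 'a \<Rightarrow> 'a" where
  "pseudo_grad m P f x = (\<Sum>i\<in>{1..m}. partial_grad (P i) (f i) x)"

definition normal_cone :: "'a::real_inner set \<Rightarrow> 'a set \<Rightarrow> 'a \<Rightarrow> 'a set" where
  "normal_cone S C x = (if x \<in> C then {d \<in> S. \<forall>c\<in>C. d \<bullet> (c - x) \<le> 0} else {})"

definition iota :: "'a set \<Rightarrow> 'a \<Rightarrow> ereal" where
  "iota D y = (if y \<in> D then 0 else \<infinity>)"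

definition conjugate :: "('a::real_inner \<Rightarrow> ereal) \<Rightarrow> 'a \<Rightarrow> ereal" where
  "conjugate f u = (SUP y. ereal (y \<bullet> u) - f y)"

definition subdiff :: "('a::real_inner \<Rightarrow> ereal) \<Rightarrow> 'a \<Rightarrow> 'a set" where
  "subdiff f u = {v. f u \<noteq> \<infinity> \<and> f u \<noteq> -\<infinity> \<and> (\<forall>w. f u + ereal (v \<bullet> (w - u)) \<le> f w)}"

definition feas :: "nat \<Rightarrow> (nat \<Rightarrow> 'a::euclidean_space \<Rightarrow> 'a) \<Rightarrow> (nat \<Rightarrow> 'a set) \<Rightarrow> ('a \<Rightarrow> 'g) \<Rightarrow> 'g set \<Rightarrow> 'a set" where
  "feas m P C L D = {x. (\<forall>i\<in>{1..m}. P i x \<in> C i) \<and> L x \<in> D}"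

definition VI_sol :: "('a::real_inner \<Rightarrow> 'a) \<Rightarrow> 'a set \<Rightarrow> 'a set" where
  "VI_sol F K = {v \<in> K. \<forall>w\<in>K. F v \<bullet> (w - v) \<ge> 0}"

definition resolvent :: "real \<Rightarrow> ('a::real_vector \<Rightarrow> 'a set) \<Rightarrow> 'a \<Rightarrow> 'a" where
  "resolvent \<gamma> B z = (THE w. z \<in> {w + \<gamma> *\<^sub>R b | b. b \<in> B w})"

definition opA :: "('a::euclidean_space \<Rightarrow> 'a) \<Rightarrow> ('a \<Rightarrow> 'g::euclidean_space) \<Rightarrow> 'a \<times> 'g \<Rightarrow> 'a \<times> 'g" where
  "opA G L = (\<lambda>(x, u). (G x + adjoint L u, - L x))"

definition opB :: "nat \<Rightarrow> (nat \<Rightarrow> 'a::euclidean_space \<Rightarrow> 'a) \<Rightarrow> (nat \<Rightarrow> 'a set) \<Rightarrow> 'g::euclidean_space set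
                    \<Rightarrow> 'a \<times> 'g \<Rightarrow> ('a \<times> 'g) set" where
  "opB m P C D = (\<lambda>(x, u). {(a, b). (\<forall>i\<in>{1..m}. P i a \<in> normal_cone (range (P i)) (C i) (P i x))
                                   \<and> b \<in> subdiff (conjugate (iota D)) u})"

definition T_FBF :: "real \<Rightarrow> ('b::real_vector \<Rightarrow> 'b) \<Rightarrow> ('b \<Rightarrow> 'b set) \<Rightarrow> 'b \<Rightarrow> 'b" where
  "T_FBF \<gamma> A B \<xi> =
     (let J = resolvent \<gamma> B; p = J (\<xi> - \<gamma> *\<^sub>R A \<xi>) in (p - \<gamma> *\<^sub>R A p) + \<gamma> *\<^sub>R A \<xi>)"

definition T_alpha :: "real \<Rightarrow> ('b::real_vector \<Rightarrow> 'b) \<Rightarrow> 'b \<Rightarrow> 'b" where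
  "T_alpha \<alpha> T \<xi> = (1 - \<alpha>) *\<^sub>R \<xi> + \<alpha> *\<^sub>R T \<xi>"

end

theory Submission
  imports Defs
begin

text \<open>The iteration is Tseng's forward-backward-forward method for the inclusion
  \<open>0 \<in> A(x, u) + B(x, u)\<close>, whose zeros are the primal-dual (KKT) points of the constrained
  game, perturbed by vanishing steps \<open>lam\<close> along the lifted upper-level operator
  \<open>F(x, u) = (Gu x, 0)\<close>. Cluster points of the ergodic averages of the iterates satisfy
  Minty's condition, so zeros exist. If the zero set is bounded, no direction separates \<open>L(C)\<close>
  from \<open>D\<close>, so Lagrange multipliers exist and the primal parts of the zeros are exactly the
  variational equilibria \<open>V\<close>. Hence the solution set \<open>S\<close> of the variational inequality of
  \<open>F\<close> over the zeros projects into \<open>Vu\<close>, and it suffices to show \<open>d(\<xi> n, S) \<longlonglongrightarrow> 0\<close>.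

  With \<open>z \<in> S\<close> closest to \<open>\<xi> n\<close> and \<open>\<eta> = T\<^sub>\<alpha> (\<xi> n)\<close>, the step gives
  \<open>d(\<xi> (n+1), S)\<^sup>2 \<le> d(\<xi> n, S)\<^sup>2 - (1-\<alpha>)/\<alpha> \<parallel>\<eta> - \<xi> n\<parallel>\<^sup>2
     - 2 lam(n+1) \<langle>F \<eta>, \<eta> - z\<rangle> + O(lam(n+1)\<^sup>2)\<close>.
  By compactness and paramonotonicity of \<open>F\<close>, at distance at least \<open>\<epsilon>\<close> from \<open>S\<close> one of the two
  negative terms is uniformly large, so there the squared distance drops by a fixed multiple of
  \<open>lam(n+1)\<close>, while elsewhere it grows by \<open>O(lam(n+1))\<close>. As \<open>lam\<close> is not summable and
  tends to \<open>0\<close>, the distance tends to \<open>0\<close>.\<close>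

lemma norm_add_scaleR_sq:
  fixes x y :: "'a::real_inner"
  shows "norm (x + c *\<^sub>R y)^2 = norm x^2 + 2 * c * (y \<bullet> x) + c^2 * norm y^2"
  unfolding power2_norm_eq_inner
  by (simp add: inner_add_left inner_add_right inner_commute power2_eq_square)

lemma norm_diff_scaleR_sq:
  fixes x y :: "'a::real_inner"
  shows "norm (x - c *\<^sub>R y)^2 = norm x^2 - 2 * c * (y \<bullet> x) + c^2 * norm y^2"
  using norm_add_scaleR_sq[of x "- c" y] by simp

lemma norm_convex_combination_sq:
  fixes u v :: "'a::real_inner"
  shows "norm ((1 - \<alpha>) *\<^sub>R u + \<alpha> *\<^sub>R v)^2
           = (1 - \<alpha>) * norm u^2 + \<alpha> * norm v^2 - \<alpha> * (1 - \<alpha>) * norm (u - v)^2"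
  unfolding power2_norm_eq_inner
  by (simp add: inner_add_left inner_add_right inner_diff_left inner_diff_right inner_commute
      algebra_simps power2_eq_square)

section \<open>Forward-backward-forward splitting\<close>

locale fbf_splitting =
  fixes A :: "'e::euclidean_space \<Rightarrow> 'e" and B :: "'e \<Rightarrow> 'e set" and \<gamma> K :: real
  assumes A_monotone: "\<And>x y. (A x - A y) \<bullet> (x - y) \<ge> 0"
    and A_lipschitz: "\<And>x y. norm (A x - A y) \<le> K * norm (x - y)"
    and K_nonneg: "K \<ge> 0" and gamma_pos: "\<gamma> > 0" and gamma_K_less_1: "\<gamma> * K < 1"
    and B_monotone: "\<And>x y a b. a \<in> B x \<Longrightarrow> b \<in> B y \<Longrightarrow> (a - b) \<bullet> (x - y) \<ge> 0"
    and B_range: "\<And>z. \<exists>w. \<exists>b\<in>B w. z = w + \<gamma> *\<^sub>R b"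
begin

definition zeros :: "'e set" where
  "zeros = {x. - A x \<in> B x}"

lemma resolvent_eqI:
  assumes "b \<in> B w" "z = w + \<gamma> *\<^sub>R b"
  shows "resolvent \<gamma> B z = w"
  unfolding resolvent_def
proof (rule the_equality)
  show "z \<in> {w + \<gamma> *\<^sub>R b |b. b \<in> B w}" using assms by auto
next
  fix w' assume "z \<in> {w' + \<gamma> *\<^sub>R b |b. b \<in> B w'}"
  then obtain b' where b': "b' \<in> B w'" "z = w' + \<gamma> *\<^sub>R b'" by auto
  have w: "w - w' = \<gamma> *\<^sub>R (b' - b)" using assms(2) b'(2) by (simp add: algebra_simps)
  have "0 \<le> (b - b') \<bullet> (w - w')" using B_monotone[OF assms(1) b'(1)] .
  also have "\<dots> = - \<gamma> * norm (b - b')^2"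
    unfolding w by (simp add: power2_norm_eq_inner inner_simps algebra_simps)
  finally have "b = b'" using gamma_pos by (simp add: mult_le_0_iff)
  then show "w' = w" using w by simp
qed

lemma resolvent_inverse: obtains b where "b \<in> B (resolvent \<gamma> B z)" "z = resolvent \<gamma> B z + \<gamma> *\<^sub>R b"
proof -
  obtain w b where wb: "b \<in> B w" "z = w + \<gamma> *\<^sub>R b" using B_range by blast
  have res: "resolvent \<gamma> B z = w" using wb by (rule resolvent_eqI)
  show thesis using that[of b] wb unfolding res by blast
qed

lemma resolvent_nonexpansive: "norm (resolvent \<gamma> B z - resolvent \<gamma> B z') \<le> norm (z - z')"
proof -
  obtain b where b: "b \<in> B (resolvent \<gamma> B z)" "z = resolvent \<gamma> B z + \<gamma> *\<^sub>R b"
    by (rule resolvent_inverse)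
  obtain b' where b': "b' \<in> B (resolvent \<gamma> B z')" "z' = resolvent \<gamma> B z' + \<gamma> *\<^sub>R b'"
    by (rule resolvent_inverse)
  define w where "w = resolvent \<gamma> B z - resolvent \<gamma> B z'"
  have mono: "(b - b') \<bullet> w \<ge> 0" unfolding w_def using B_monotone[OF b(1) b'(1)] .
  have "z - z' = w + \<gamma> *\<^sub>R (b - b')" unfolding w_def by (subst b(2), subst b'(2)) (simp add: algebra_simps)
  then have "norm (z - z')^2 = norm w^2 + 2 * \<gamma> * ((b - b') \<bullet> w) + \<gamma>^2 * norm (b - b')^2"
    by (simp add: norm_add_scaleR_sq)
  also have "\<dots> \<ge> norm w^2" using mono gamma_pos by simp
  finally show ?thesis unfolding w_def by (rule power2_le_imp_le) simp
qed

lemma continuous_on_resolvent: "continuous_on UNIV (resolvent \<gamma> B)"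
  by (rule lipschitz_on_continuous_on[where L=1], rule lipschitz_onI)
     (use resolvent_nonexpansive in \<open>auto simp: dist_norm\<close>)

lemma continuous_on_A: "continuous_on UNIV A"
  by (rule lipschitz_on_continuous_on[where L=K], rule lipschitz_onI)
     (use A_lipschitz K_nonneg in \<open>auto simp: dist_norm\<close>)

lemma T_FBF_eq:
  "T_FBF \<gamma> A B \<xi> = resolvent \<gamma> B (\<xi> - \<gamma> *\<^sub>R A \<xi>)
     - \<gamma> *\<^sub>R A (resolvent \<gamma> B (\<xi> - \<gamma> *\<^sub>R A \<xi>)) + \<gamma> *\<^sub>R A \<xi>"
  by (simp add: T_FBF_def Let_def)

lemma continuous_on_T_FBF: "continuous_on UNIV (T_FBF \<gamma> A B)"
proof -
  have "continuous_on UNIV (\<lambda>\<xi>. resolvent \<gamma> B (\<xi> - \<gamma> *\<^sub>R A \<xi>))"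
    by (rule continuous_on_compose2[OF continuous_on_resolvent])
       (auto intro!: continuous_intros continuous_on_A)
  then show ?thesis
    unfolding T_FBF_eq[abs_def]
    by (auto intro!: continuous_intros continuous_on_A continuous_on_compose2[OF continuous_on_A])
qed

lemma continuous_on_T_alpha: "continuous_on UNIV (T_alpha \<alpha> (T_FBF \<gamma> A B))"
  unfolding T_alpha_def[abs_def] by (auto intro!: continuous_intros continuous_on_T_FBF)

lemma eq_if_norm_le_gamma_K:
  assumes "norm (p - q) \<le> \<gamma> * K * norm (p - q)"
  shows "p = q"
  using assms gamma_K_less_1 mult_le_cancel_right1[of "norm (p - q)" "\<gamma> * K"] by auto

lemma mem_zerosI:
  assumes "resolvent \<gamma> B (q - \<gamma> *\<^sub>R A q) = q"
  shows "q \<in> zeros"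
proof -
  obtain b where b: "b \<in> B q" "q - \<gamma> *\<^sub>R A q = q + \<gamma> *\<^sub>R b"
    using resolvent_inverse[of "q - \<gamma> *\<^sub>R A q"] unfolding assms by blast
  then have "\<gamma> *\<^sub>R (b + A q) = 0" by (simp add: algebra_simps)
  then have "b = - A q" using gamma_pos by (simp add: eq_neg_iff_add_eq_0)
  with b(1) show ?thesis unfolding zeros_def by simp
qed

text \<open>Tseng's estimate; the correction step absorbs the error of the forward step because
  \<open>\<gamma> K < 1\<close>.\<close>

lemma T_FBF_dist_sq_le:
  assumes bz: "bz \<in> B z"
  shows "norm (T_FBF \<gamma> A B \<xi> - z)^2 \<le> norm (\<xi> - z)^2
           - 2 * \<gamma> * ((A z + bz) \<bullet> (resolvent \<gamma> B (\<xi> - \<gamma> *\<^sub>R A \<xi>) - z))"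
proof -
  define p where "p = resolvent \<gamma> B (\<xi> - \<gamma> *\<^sub>R A \<xi>)"
  obtain b where b: "b \<in> B p" "\<xi> - \<gamma> *\<^sub>R A \<xi> = p + \<gamma> *\<^sub>R b"
    using resolvent_inverse unfolding p_def by blast
  define d where "d = A p - A \<xi>"
  define s where "s = b + A \<xi>"
  have \<xi>: "\<xi> = p + \<gamma> *\<^sub>R s" using b(2) unfolding s_def by (simp add: algebra_simps)
  have "T_FBF \<gamma> A B \<xi> - z = (p - z) - \<gamma> *\<^sub>R d"
    unfolding T_FBF_eq p_def[symmetric] d_def by (simp add: algebra_simps)
  then have T: "norm (T_FBF \<gamma> A B \<xi> - z)^2 = norm (p - z)^2 - 2 * \<gamma> * (d \<bullet> (p - z)) + \<gamma>^2 * norm d^2"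
    by (simp only: norm_diff_scaleR_sq)
  have "\<xi> - z = (p - z) + \<gamma> *\<^sub>R s" using \<xi> by (simp add: algebra_simps)
  then have X: "norm (\<xi> - z)^2 = norm (p - z)^2 + 2 * \<gamma> * (s \<bullet> (p - z)) + \<gamma>^2 * norm s^2"
    by (simp only: norm_add_scaleR_sq)
  have "0 \<le> (A p - A z) \<bullet> (p - z) + (b - bz) \<bullet> (p - z)"
    using A_monotone B_monotone[OF b(1) bz] by (simp add: add_nonneg_nonneg)
  also have "\<dots> = d \<bullet> (p - z) + s \<bullet> (p - z) - (A z + bz) \<bullet> (p - z)"
    unfolding d_def s_def by (simp add: inner_simps)
  finally have mono: "(A z + bz) \<bullet> (p - z) \<le> d \<bullet> (p - z) + s \<bullet> (p - z)" by simp
  have "norm d \<le> K * norm (p - \<xi>)" unfolding d_def by (rule A_lipschitz)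
  also have "\<dots> = (\<gamma> * K) * norm s" using \<xi> gamma_pos by (simp add: norm_minus_commute)
  also have "\<dots> \<le> norm s" using gamma_K_less_1 gamma_pos K_nonneg by (simp add: mult_left_le_one_le)
  finally have "norm d^2 \<le> norm s^2" by (simp add: power_mono)
  then have "\<gamma>^2 * norm d^2 \<le> \<gamma>^2 * norm s^2" by (rule mult_left_mono) simp
  moreover have "\<gamma> * ((A z + bz) \<bullet> (p - z)) \<le> \<gamma> * (d \<bullet> (p - z)) + \<gamma> * (s \<bullet> (p - z))"
    using mult_left_mono[OF mono, of \<gamma>] gamma_pos by (simp add: distrib_left)
  ultimately show ?thesis unfolding p_def[symmetric] T X by linarith
qed

lemma T_alpha_minus: "T_alpha \<alpha> T \<xi> - z = (1 - \<alpha>) *\<^sub>R (\<xi> - z) + \<alpha> *\<^sub>R (T \<xi> - z)"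
  by (simp add: T_alpha_def algebra_simps)

lemma T_alpha_dist_sq_le:
  assumes "bz \<in> B z" "0 \<le> \<alpha>" "\<alpha> \<le> 1"
  shows "norm (T_alpha \<alpha> (T_FBF \<gamma> A B) \<xi> - z)^2 \<le> norm (\<xi> - z)^2
           - 2 * \<alpha> * \<gamma> * ((A z + bz) \<bullet> (resolvent \<gamma> B (\<xi> - \<gamma> *\<^sub>R A \<xi>) - z))"
proof -
  let ?W = "(A z + bz) \<bullet> (resolvent \<gamma> B (\<xi> - \<gamma> *\<^sub>R A \<xi>) - z)"
  have "norm (T_alpha \<alpha> (T_FBF \<gamma> A B) \<xi> - z)^2
          \<le> (1 - \<alpha>) * norm (\<xi> - z)^2 + \<alpha> * norm (T_FBF \<gamma> A B \<xi> - z)^2"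
    unfolding T_alpha_minus norm_convex_combination_sq using assms by simp
  also have "\<dots> \<le> (1 - \<alpha>) * norm (\<xi> - z)^2 + \<alpha> * (norm (\<xi> - z)^2 - 2 * \<gamma> * ?W)"
    using T_FBF_dist_sq_le[OF assms(1)] assms by (simp add: mult_left_mono)
  finally show ?thesis by (simp add: algebra_simps)
qed

lemma T_alpha_dist_sq_le_zero:
  assumes "z \<in> zeros" "0 < \<alpha>" "\<alpha> \<le> 1"
  shows "norm (T_alpha \<alpha> (T_FBF \<gamma> A B) \<xi> - z)^2
           \<le> norm (\<xi> - z)^2 - ((1 - \<alpha>) / \<alpha>) * norm (T_alpha \<alpha> (T_FBF \<gamma> A B) \<xi> - \<xi>)^2"
proof -
  let ?T = "T_FBF \<gamma> A B \<xi>"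
  have "norm (?T - z)^2 \<le> norm (\<xi> - z)^2"
    using T_FBF_dist_sq_le[of "- A z" z \<xi>] assms(1) unfolding zeros_def by simp
  then have "norm (T_alpha \<alpha> (T_FBF \<gamma> A B) \<xi> - z)^2
      \<le> norm (\<xi> - z)^2 - \<alpha> * (1 - \<alpha>) * norm (?T - \<xi>)^2"
    unfolding T_alpha_minus norm_convex_combination_sq using assms
    by (simp add: norm_minus_commute algebra_simps mult_left_mono)
  also have "T_alpha \<alpha> (T_FBF \<gamma> A B) \<xi> - \<xi> = \<alpha> *\<^sub>R (?T - \<xi>)"
    by (simp add: T_alpha_def algebra_simps)
  then have "norm (T_alpha \<alpha> (T_FBF \<gamma> A B) \<xi> - \<xi>) = \<alpha> * norm (?T - \<xi>)"
    using assms(2) by simp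
  then have "\<alpha> * (1 - \<alpha>) * norm (?T - \<xi>)^2
      = ((1 - \<alpha>) / \<alpha>) * norm (T_alpha \<alpha> (T_FBF \<gamma> A B) \<xi> - \<xi>)^2"
    using assms(2) by (simp add: power2_eq_square field_simps)
  finally show ?thesis .
qed

lemma T_FBF_fixed_iff: "T_FBF \<gamma> A B \<xi> = \<xi> \<longleftrightarrow> \<xi> \<in> zeros"
proof
  assume "\<xi> \<in> zeros"
  then have "resolvent \<gamma> B (\<xi> - \<gamma> *\<^sub>R A \<xi>) = \<xi>"
    by (intro resolvent_eqI[of "- A \<xi>"]) (auto simp: zeros_def)
  then show "T_FBF \<gamma> A B \<xi> = \<xi>" unfolding T_FBF_eq by simp
next
  assume fixed: "T_FBF \<gamma> A B \<xi> = \<xi>"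
  define p where "p = resolvent \<gamma> B (\<xi> - \<gamma> *\<^sub>R A \<xi>)"
  have "p - \<xi> = \<gamma> *\<^sub>R (A p - A \<xi>)"
    using fixed unfolding T_FBF_eq p_def[symmetric] by (simp add: algebra_simps)
  then have "norm (p - \<xi>) \<le> \<gamma> * K * norm (p - \<xi>)"
    using A_lipschitz[of p \<xi>] gamma_pos by (simp add: mult.assoc mult_left_mono)
  then have "p = \<xi>" by (rule eq_if_norm_le_gamma_K)
  then show "\<xi> \<in> zeros" unfolding p_def by (rule mem_zerosI)
qed

lemma T_alpha_fixed_iff:
  assumes "\<alpha> \<noteq> 0"
  shows "T_alpha \<alpha> (T_FBF \<gamma> A B) \<xi> = \<xi> \<longleftrightarrow> \<xi> \<in> zeros"
proof -
  have "T_alpha \<alpha> (T_FBF \<gamma> A B) \<xi> - \<xi> = \<alpha> *\<^sub>R (T_FBF \<gamma> A B \<xi> - \<xi>)"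
    by (simp add: T_alpha_def algebra_simps)
  then show ?thesis using assms T_FBF_fixed_iff by (metis eq_iff_diff_eq_0 scaleR_eq_0_iff)
qed

text \<open>Minty's characterisation: \<open>A + B\<close> is maximal monotone because \<open>Id + \<gamma>B\<close> is onto
  (assumption \<open>B_range\<close>).\<close>

lemma zeros_iff_minty: "q \<in> zeros \<longleftrightarrow> (\<forall>z bz. bz \<in> B z \<longrightarrow> (A z + bz) \<bullet> (z - q) \<ge> 0)"
proof
  assume "q \<in> zeros"
  show "\<forall>z bz. bz \<in> B z \<longrightarrow> (A z + bz) \<bullet> (z - q) \<ge> 0"
  proof (intro allI impI)
    fix z bz assume "bz \<in> B z"
    then have "0 \<le> (bz - (- A q)) \<bullet> (z - q)"
      using B_monotone \<open>q \<in> zeros\<close> unfolding zeros_def by blast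
    with A_monotone[of z q] show "(A z + bz) \<bullet> (z - q) \<ge> 0" by (simp add: inner_simps)
  qed
next
  assume minty: "\<forall>z bz. bz \<in> B z \<longrightarrow> (A z + bz) \<bullet> (z - q) \<ge> 0"
  define p where "p = resolvent \<gamma> B (q - \<gamma> *\<^sub>R A q)"
  obtain b where b: "b \<in> B p" "q - \<gamma> *\<^sub>R A q = p + \<gamma> *\<^sub>R b"
    using resolvent_inverse unfolding p_def by blast
  have "(A p - A q) \<bullet> (p - q) \<le> norm (A p - A q) * norm (p - q)"
    by (rule norm_cauchy_schwarz)
  also have "\<dots> \<le> K * norm (p - q) * norm (p - q)"
    using A_lipschitz by (simp add: mult_right_mono)
  finally have lip: "\<gamma> * ((A p - A q) \<bullet> (p - q)) \<le> (\<gamma> * K * norm (p - q)) * norm (p - q)"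
    using gamma_pos by (simp add: mult.assoc mult_left_mono)
  have "\<gamma> *\<^sub>R (A p + b) = \<gamma> *\<^sub>R (A p - A q) - (p - q)" using b(2) by (simp add: algebra_simps)
  from arg_cong[OF this, of "\<lambda>v. v \<bullet> (p - q)"]
  have "\<gamma> * ((A p + b) \<bullet> (p - q)) = \<gamma> * ((A p - A q) \<bullet> (p - q)) - norm (p - q) * norm (p - q)"
    by (simp add: inner_diff_left flip: power2_norm_eq_inner power2_eq_square)
  moreover have "0 \<le> \<gamma> * ((A p + b) \<bullet> (p - q))" using minty b(1) gamma_pos by simp
  ultimately have "norm (p - q) * norm (p - q) \<le> (\<gamma> * K * norm (p - q)) * norm (p - q)"
    using lip by linarith
  then have "norm (p - q) \<le> \<gamma> * K * norm (p - q)"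
    using mult_right_le_imp_le[of "norm (p - q)" "norm (p - q)" "\<gamma> * K * norm (p - q)"]
    by (cases "p = q") auto
  then have "p = q" by (rule eq_if_norm_le_gamma_K)
  then show "q \<in> zeros" unfolding p_def by (rule mem_zerosI)
qed

lemma closed_zeros: "closed zeros" and convex_zeros: "convex zeros"
proof -
  have zeros: "zeros = (\<Inter>(z, bz)\<in>{(z, bz). bz \<in> B z}. {q. (A z + bz) \<bullet> q \<le> (A z + bz) \<bullet> z})"
    using zeros_iff_minty by (auto simp: inner_diff_right)
  show "closed zeros" unfolding zeros by (rule closed_INT) (auto intro: closed_halfspace_le)
  show "convex zeros" unfolding zeros by (rule convex_INT) (auto intro: convex_halfspace_le)
qed

end

section \<open>Real sequences driven by non-summable steps\<close>

lemma cesaro_mean_tendsto_zero: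
  fixes f :: "nat \<Rightarrow> real"
  assumes "f \<longlonglongrightarrow> 0"
  shows "(\<lambda>n. (\<Sum>k<n. f k) / real n) \<longlonglongrightarrow> 0"
proof (rule LIMSEQ_I)
  fix r :: real assume r: "r > 0"
  obtain N0 where N0: "\<And>n. n \<ge> N0 \<Longrightarrow> \<bar>f n\<bar> < r / 2"
    using LIMSEQ_D[OF assms, of "r / 2"] r by auto
  define S0 where "S0 = (\<Sum>k<N0. \<bar>f k\<bar>)"
  obtain N1 :: nat where N1: "2 * S0 / r < real N1" using reals_Archimedean2 by blast
  have "\<bar>(\<Sum>k<n. f k) / real n\<bar> < r" if n: "n \<ge> max (Suc N0) N1" for n
  proof -
    have "\<bar>\<Sum>k<n. f k\<bar> \<le> (\<Sum>k<n. \<bar>f k\<bar>)" by (rule sum_abs)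
    also have "\<dots> = S0 + (\<Sum>k\<in>{N0..<n}. \<bar>f k\<bar>)"
      unfolding S0_def using n by (simp add: sum.atLeastLessThan_concat[of 0, symmetric] lessThan_atLeast0)
    also have "(\<Sum>k\<in>{N0..<n}. \<bar>f k\<bar>) \<le> (\<Sum>k\<in>{N0..<n}. r / 2)"
      using N0 by (intro sum_mono) (auto simp: less_imp_le)
    also have "\<dots> \<le> real n * (r / 2)" using r by simp
    also have "S0 < real n * (r / 2)"
    proof -
      have "2 * S0 / r < real n" using N1 n by (meson max.boundedE of_nat_le_iff less_le_trans)
      then show ?thesis using r by (simp add: field_simps)
    qed
    finally have "\<bar>\<Sum>k<n. f k\<bar> < real n * r" by (simp add: mult.commute)
    then show ?thesis using n by (simp add: field_simps abs_divide)
  qed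
  then show "\<exists>N. \<forall>n\<ge>N. norm ((\<Sum>k<n. f k) / real n - 0) < r" by (metis real_norm_def diff_zero)
qed

lemma cesaro_affine_tendsto_zero:
  fixes f :: "nat \<Rightarrow> real"
  assumes "f \<longlonglongrightarrow> 0"
  shows "(\<lambda>N. (a + Q * (\<Sum>n\<le>N. f n)) / (c * real (Suc N))) \<longlonglongrightarrow> 0"
proof (cases "c = 0")
  case False
  have "(\<lambda>n. (\<Sum>k<n. f k) / real n) \<longlonglongrightarrow> 0" by (rule cesaro_mean_tendsto_zero[OF assms])
  then have mean: "(\<lambda>N. (\<Sum>n\<le>N. f n) / real (Suc N)) \<longlonglongrightarrow> 0"
    using LIMSEQ_Suc by (force simp: lessThan_Suc_atMost)
  have "(\<lambda>N. (a * (1 / real (Suc N)) + Q * ((\<Sum>n\<le>N. f n) / real (Suc N))) / c)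
          \<longlonglongrightarrow> (a * 0 + Q * 0) / c"
    by (intro tendsto_intros mean LIMSEQ_Suc[OF lim_const_over_n]) (use False in auto)
  moreover have "(\<lambda>N. (a + Q * (\<Sum>n\<le>N. f n)) / (c * real (Suc N)))
      = (\<lambda>N. (a * (1 / real (Suc N)) + Q * ((\<Sum>n\<le>N. f n) / real (Suc N))) / c)"
    by (simp add: fun_eq_iff add_divide_distrib mult.commute)
  ultimately show ?thesis by simp
qed simp

lemma descent_reaches_below:
  fixes a lam :: "nat \<Rightarrow> real"
  assumes a_nonneg: "\<And>n. 0 \<le> a n" and lam_nonneg: "\<And>n. 0 \<le> lam n"
    and lam_not_summable: "\<not> summable lam" and \<delta>: "\<delta> > 0"
    and descent: "\<And>n. n \<ge> N \<Longrightarrow> e \<le> a n \<Longrightarrow> a (Suc n) \<le> a n - \<delta> * lam (Suc n)"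
  shows "\<exists>n\<ge>N. a n < e"
proof (rule ccontr)
  assume "\<not> ?thesis"
  then have far: "\<And>n. n \<ge> N \<Longrightarrow> e \<le> a n" by (meson not_le)
  have decr: "a (N + k) \<le> a N - \<delta> * (\<Sum>j<k. lam (j + Suc N))" for k
  proof (induction k)
    case (Suc k)
    have "a (Suc (N + k)) \<le> a (N + k) - \<delta> * lam (Suc (N + k))" using descent far by simp
    then show ?case using Suc.IH by (simp add: algebra_simps)
  qed simp
  have "(\<Sum>j<k. lam (j + Suc N)) \<le> a N / \<delta>" for k
    using decr[of k] a_nonneg[of "N + k"] \<delta> by (simp add: field_simps)
  then have "summable (\<lambda>j. lam (j + Suc N))"
    using lam_nonneg by (intro summableI_nonneg_bounded) auto
  with lam_not_summable summable_iff_shift[of lam "Suc N"] show False by blast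
qed

lemma tendsto_zero_by_descent:
  fixes a lam :: "nat \<Rightarrow> real"
  assumes a_nonneg: "\<And>n. 0 \<le> a n" and lam_nonneg: "\<And>n. 0 \<le> lam n"
    and lam_lim: "lam \<longlonglongrightarrow> 0" and lam_not_summable: "\<not> summable lam"
    and growth: "\<forall>\<^sub>F n in sequentially. a (Suc n) \<le> a n + H * lam (Suc n)"
    and descent: "\<And>e. e > 0 \<Longrightarrow>
       \<exists>\<delta>>0. \<forall>\<^sub>F n in sequentially. e \<le> a n \<longrightarrow> a (Suc n) \<le> a n - \<delta> * lam (Suc n)"
  shows "a \<longlonglongrightarrow> 0"
proof (rule LIMSEQ_I)
  fix \<epsilon> :: real assume \<epsilon>: "\<epsilon> > 0"
  define e where "e = \<epsilon> / 2"
  define H' where "H' = max H 1"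
  have e: "e > 0" and H': "H' > 0" "H \<le> H'" using \<epsilon> by (auto simp: e_def H'_def)
  obtain \<delta> where \<delta>: "\<delta> > 0"
    and desc: "\<forall>\<^sub>F n in sequentially. e \<le> a n \<longrightarrow> a (Suc n) \<le> a n - \<delta> * lam (Suc n)"
    using descent[OF e] by blast
  have "\<forall>\<^sub>F n in sequentially. lam n < e / H'"
    using lam_lim e H' by (auto simp: order_tendsto_iff)
  then have small: "\<forall>\<^sub>F n in sequentially. lam (Suc n) < e / H'"
    by (rule eventually_sequentially_Suc[THEN iffD2])
  obtain N where N: "\<And>n. n \<ge> N \<Longrightarrow> a (Suc n) \<le> a n + H * lam (Suc n) \<and>
      (e \<le> a n \<longrightarrow> a (Suc n) \<le> a n - \<delta> * lam (Suc n)) \<and> lam (Suc n) < e / H'"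
    using eventually_conj[OF growth eventually_conj[OF desc small]]
    unfolding eventually_sequentially by blast
  have "a (Suc n) \<le> a n - \<delta> * lam (Suc n)" if "n \<ge> N" "e \<le> a n" for n
    using N that by blast
  then obtain N2 where N2: "N2 \<ge> N" "a N2 < e"
    using descent_reaches_below[where a = a and lam = lam and N = N and e = e,
        OF a_nonneg lam_nonneg lam_not_summable \<delta>] by blast
  have step: "a (Suc n) < \<epsilon>" if n: "n \<ge> N" "a n < \<epsilon>" for n
  proof (cases "e \<le> a n")
    case True
    moreover have "0 \<le> \<delta> * lam (Suc n)" using \<delta> lam_nonneg by simp
    ultimately show ?thesis using N[OF n(1)] n(2) by linarith
  next
    case False
    have "H * lam (Suc n) \<le> H' * lam (Suc n)" using H' lam_nonneg by (simp add: mult_right_mono)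
    also have "\<dots> < e" using N[OF n(1)] H' by (simp add: field_simps)
    finally show ?thesis using N[OF n(1)] False by (simp add: e_def)
  qed
  have "a n < \<epsilon>" if "n \<ge> N2" for n
    using that by (induction n rule: dec_induct) (use N2 e step in \<open>auto simp: e_def\<close>)
  then show "\<exists>N. \<forall>n\<ge>N. norm (a n - 0) < \<epsilon>" using a_nonneg by auto
qed

lemma descent_estimate:
  fixes a a' c d h l m H M \<delta> :: real
  assumes a': "a' \<le> a - c * d^2 - 2 * l * h + l^2 * m"
    and c: "0 \<le> c" and l: "0 \<le> l" "l \<le> 1" and h: "- h \<le> H" and m: "0 \<le> m" "m \<le> M"
    and \<delta>: "0 < \<delta>" "\<delta> \<le> d \<or> \<delta> \<le> h"
    and small: "l * (2 * H + M + \<delta>) \<le> c * \<delta>^2" "l * M \<le> \<delta>"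
  shows "a' \<le> a - \<delta> * l"
proof -
  have lm: "l * m \<le> M" using m l mult_left_le_one_le[of m l] by linarith
  have lmM: "l * m \<le> l * M" using mult_left_mono[OF m(2) l(1)] .
  have lm2: "l^2 * m = l * (l * m)" by (simp add: power2_eq_square)
  from \<delta>(2) show ?thesis
  proof
    assume "\<delta> \<le> d"
    then have "c * \<delta>^2 \<le> c * d^2" using c \<delta>(1) by (intro mult_left_mono power_mono) auto
    moreover have "- 2 * l * h \<le> 2 * l * H" using mult_left_mono[OF h l(1)] by (simp add: mult.commute)
    moreover have "l^2 * m \<le> l * M" unfolding lm2 using mult_left_mono[OF lm l(1)] .
    ultimately show ?thesis using a' small(1) by (simp add: algebra_simps)
  next
    assume "\<delta> \<le> h"
    then have "- 2 * l * h \<le> - 2 * l * \<delta>" using l(1) by (simp add: mult_left_mono)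
    moreover have "l^2 * m \<le> l * \<delta>"
      unfolding lm2 using mult_left_mono[OF order_trans[OF lmM small(2)] l(1)] .
    moreover have "0 \<le> c * d^2" using c by simp
    ultimately show ?thesis using a' by (simp add: algebra_simps)
  qed
qed

section \<open>The perturbed iteration\<close>

lemma bounded_continuous_image:
  fixes g :: "'a::heine_borel \<Rightarrow> 'b::metric_space"
  assumes "bounded S" "continuous_on UNIV g"
  shows "bounded (g ` S)"
  using assms
  by (meson bounded_closure_image compact_closure compact_continuous_image compact_imp_bounded
      continuous_on_subset subset_UNIV)

locale fbf_iteration = fbf_splitting A B \<gamma> K
  for A :: "'e::euclidean_space \<Rightarrow> 'e" and B \<gamma> K +
  fixes \<alpha> :: real and F :: "'e \<Rightarrow> 'e" and lam :: "nat \<Rightarrow> real" and \<xi> :: "nat \<Rightarrow> 'e"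
  assumes alpha: "0 < \<alpha>" "\<alpha> < 1"
    and continuous_F: "continuous_on UNIV F"
    and lam_nonneg: "\<And>n. lam n \<ge> 0" and lam_lim: "lam \<longlonglongrightarrow> 0"
    and lam_not_summable: "\<not> summable lam"
    and iteration: "\<And>n. \<xi> (Suc n) = T_alpha \<alpha> (T_FBF \<gamma> A B) (\<xi> n)
                            - lam (Suc n) *\<^sub>R F (T_alpha \<alpha> (T_FBF \<gamma> A B) (\<xi> n))"
    and bounded_iterates: "bounded (range \<xi>)"
begin

abbreviation Ta :: "'e \<Rightarrow> 'e" where
  "Ta \<equiv> T_alpha \<alpha> (T_FBF \<gamma> A B)"

lemma eventually_lam_less: "\<eta> > 0 \<Longrightarrow> \<forall>\<^sub>F n in sequentially. lam (Suc n) < \<eta>"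
  using order_tendstoD(2)[OF lam_lim] by (rule eventually_sequentially_Suc[THEN iffD2])

lemma continuous_on_F_Ta: "continuous_on UNIV (\<lambda>x. F (Ta x))"
  by (rule continuous_on_compose2[OF continuous_F continuous_on_T_alpha]) auto

lemma bounded_iterate_image:
  assumes "continuous_on UNIV g"
  shows "bounded (range (\<lambda>n. g (\<xi> n)))"
  using bounded_continuous_image[OF bounded_iterates assms] by (simp add: image_image)

lemma iteration_dist_sq:
  "norm (\<xi> (Suc n) - z)^2 = norm (Ta (\<xi> n) - z)^2
     - 2 * lam (Suc n) * (F (Ta (\<xi> n)) \<bullet> (Ta (\<xi> n) - z)) + (lam (Suc n))^2 * norm (F (Ta (\<xi> n)))^2"
proof -
  have "\<xi> (Suc n) - z = (Ta (\<xi> n) - z) - lam (Suc n) *\<^sub>R F (Ta (\<xi> n))"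
    using iteration by (simp add: algebra_simps)
  then show ?thesis by (simp only: norm_diff_scaleR_sq)
qed

lemma perturbation_bounded:
  assumes "bounded Z"
  obtains H M where "0 \<le> H" "0 \<le> M"
    and "\<And>n z. z \<in> Z \<Longrightarrow> \<bar>F (Ta (\<xi> n)) \<bullet> (Ta (\<xi> n) - z)\<bar> \<le> H"
    and "\<And>n. norm (F (Ta (\<xi> n)))^2 \<le> M"
proof -
  obtain b1 where "b1 > 0" and b1: "\<And>n. norm (F (Ta (\<xi> n))) \<le> b1"
    using bounded_iterate_image[OF continuous_on_F_Ta] unfolding bounded_pos by blast
  obtain b2 where "b2 > 0" and b2: "\<And>n. norm (Ta (\<xi> n)) \<le> b2"
    using bounded_iterate_image[OF continuous_on_T_alpha] unfolding bounded_pos by blast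
  obtain b3 where "b3 > 0" and b3: "\<And>z. z \<in> Z \<Longrightarrow> norm z \<le> b3"
    using assms unfolding bounded_pos by blast
  have "\<bar>F (Ta (\<xi> n)) \<bullet> (Ta (\<xi> n) - z)\<bar> \<le> b1 * (b2 + b3)" if "z \<in> Z" for n z
  proof -
    have "\<bar>F (Ta (\<xi> n)) \<bullet> (Ta (\<xi> n) - z)\<bar> \<le> norm (F (Ta (\<xi> n))) * norm (Ta (\<xi> n) - z)"
      by (rule Cauchy_Schwarz_ineq2)
    also have "\<dots> \<le> b1 * (b2 + b3)"
      using b1 b2[of n] b3[OF that] norm_triangle_ineq4[of "Ta (\<xi> n)" z] \<open>b1 > 0\<close>
      by (intro mult_mono) (auto intro: order_trans)
    finally show ?thesis .
  qed
  moreover have "norm (F (Ta (\<xi> n)))^2 \<le> b1^2" for n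
    using b1 by (simp add: power_mono)
  ultimately show thesis using \<open>b1 > 0\<close> \<open>b2 > 0\<close> \<open>b3 > 0\<close> by (intro that[of "b1 * (b2 + b3)" "b1^2"]) auto
qed

lemma iteration_dist_sq_le:
  obtains Q where "\<And>n. norm (\<xi> (Suc n) - z)^2 \<le> norm (Ta (\<xi> n) - z)^2 + lam (Suc n) * Q"
proof -
  obtain H M where H: "\<And>n. \<bar>F (Ta (\<xi> n)) \<bullet> (Ta (\<xi> n) - z)\<bar> \<le> H"
    and M: "\<And>n. norm (F (Ta (\<xi> n)))^2 \<le> M"
    using perturbation_bounded[of "{z}"] by (metis bounded_empty bounded_insert singletonI)
  obtain \<Lambda> where \<Lambda>: "\<And>n. lam n \<le> \<Lambda>"
    using convergent_imp_bounded[of lam] lam_lim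
    by (metis abs_le_D1 bounded_iff convergentI rangeI real_norm_def)
  have "norm (\<xi> (Suc n) - z)^2 \<le> norm (Ta (\<xi> n) - z)^2 + lam (Suc n) * (2 * H + \<Lambda> * M)" for n
  proof -
    let ?l = "lam (Suc n)"
    have cross: "- 2 * ?l * (F (Ta (\<xi> n)) \<bullet> (Ta (\<xi> n) - z)) \<le> 2 * ?l * H"
      using mult_left_mono[OF abs_le_D2[OF H[of n]] lam_nonneg[of "Suc n"]] by (simp add: algebra_simps)
    have "?l * norm (F (Ta (\<xi> n)))^2 \<le> \<Lambda> * M"
      using M[of n] \<Lambda>[of "Suc n"] lam_nonneg[of "Suc n"] order_trans[OF lam_nonneg \<Lambda>]
      by (intro mult_mono) auto
    then have "?l^2 * norm (F (Ta (\<xi> n)))^2 \<le> ?l * (\<Lambda> * M)"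
      using lam_nonneg[of "Suc n"] by (simp add: power2_eq_square mult.assoc mult_left_mono)
    with cross show ?thesis unfolding iteration_dist_sq by (simp add: algebra_simps)
  qed
  then show thesis by (rule that)
qed

definition resolvent_point :: "nat \<Rightarrow> 'e" where
  "resolvent_point n = resolvent \<gamma> B (\<xi> n - \<gamma> *\<^sub>R A (\<xi> n))"

definition ergodic_average :: "nat \<Rightarrow> 'e" where
  "ergodic_average N = (1 / real (Suc N)) *\<^sub>R (\<Sum>n\<le>N. resolvent_point n)"

lemma bounded_ergodic_average: "bounded (range ergodic_average)"
proof -
  have "continuous_on UNIV (\<lambda>x. resolvent \<gamma> B (x - \<gamma> *\<^sub>R A x))"
    by (rule continuous_on_compose2[OF continuous_on_resolvent])
       (auto intro!: continuous_intros continuous_on_A)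
  from bounded_iterate_image[OF this] obtain b where b: "\<And>n. norm (resolvent_point n) \<le> b"
    unfolding bounded_iff resolvent_point_def by blast
  have "norm (ergodic_average N) \<le> b" for N
  proof -
    have "norm (\<Sum>n\<le>N. resolvent_point n) \<le> (\<Sum>n\<le>N. norm (resolvent_point n))"
      by (rule norm_sum)
    also have "\<dots> \<le> real (Suc N) * b" using sum_bounded_above[of "{..N}", OF b] by simp
    finally show ?thesis unfolding ergodic_average_def by (simp add: field_simps)
  qed
  then show ?thesis unfolding bounded_iff by blast
qed

text \<open>Summing the Fejer-type inequality of \<open>T_alpha_dist_sq_le\<close> along the iteration, the
  perturbation terms are controlled by the Cesaro means of \<open>lam\<close>.\<close>

lemma ergodic_minty_bound:
  assumes "bz \<in> B z"
  obtains bnd where "bnd \<longlonglongrightarrow> 0" "\<And>N. (A z + bz) \<bullet> (ergodic_average N - z) \<le> bnd N"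
proof -
  define w where "w = A z + bz"
  define a where "a n = norm (\<xi> n - z)^2" for n
  define c where "c = 2 * \<alpha> * \<gamma>"
  have c: "c > 0" unfolding c_def using alpha gamma_pos by simp
  obtain Q where Q: "\<And>n. a (Suc n) \<le> norm (Ta (\<xi> n) - z)^2 + lam (Suc n) * Q"
    using iteration_dist_sq_le[where z = z] unfolding a_def by blast
  have step: "c * (w \<bullet> (resolvent_point n - z)) \<le> a n - a (Suc n) + lam (Suc n) * Q" for n
    using T_alpha_dist_sq_le[OF assms, of \<alpha> "\<xi> n"] alpha Q[of n]
    unfolding a_def w_def c_def resolvent_point_def by simp
  define bnd where "bnd N = (a 0 + Q * (\<Sum>n\<le>N. lam (Suc n))) / (c * real (Suc N))" for N
  have "w \<bullet> (ergodic_average N - z) \<le> bnd N" for N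
  proof -
    have "c * (\<Sum>n\<le>N. w \<bullet> (resolvent_point n - z)) \<le> (\<Sum>n\<le>N. a n - a (Suc n) + lam (Suc n) * Q)"
      unfolding sum_distrib_left by (rule sum_mono) (rule step)
    also have "\<dots> = a 0 - a (Suc N) + Q * (\<Sum>n\<le>N. lam (Suc n))"
      by (simp add: sum.distrib sum_distrib_left mult.commute sum_telescope)
    also have "\<dots> \<le> a 0 + Q * (\<Sum>n\<le>N. lam (Suc n))" unfolding a_def by simp
    finally have sum: "c * (\<Sum>n\<le>N. w \<bullet> (resolvent_point n - z)) \<le> a 0 + Q * (\<Sum>n\<le>N. lam (Suc n))" .
    have "ergodic_average N - z = (1 / real (Suc N)) *\<^sub>R (\<Sum>n\<le>N. resolvent_point n - z)"
      unfolding ergodic_average_def sum_subtractf sum_constant_scaleR by (simp add: scaleR_diff_right)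
    then have "w \<bullet> (ergodic_average N - z)
        = c * (\<Sum>n\<le>N. w \<bullet> (resolvent_point n - z)) / (c * real (Suc N))"
      using c by (simp add: inner_sum_right)
    also have "\<dots> \<le> bnd N"
      unfolding bnd_def using sum c by (intro divide_right_mono) auto
    finally show ?thesis .
  qed
  moreover have "bnd \<longlonglongrightarrow> 0"
    unfolding bnd_def by (rule cesaro_affine_tendsto_zero) (rule LIMSEQ_Suc[OF lam_lim])
  ultimately show thesis using that unfolding w_def by blast
qed

text \<open>Cluster points of the ergodic averages satisfy Minty's condition.\<close>

lemma zeros_nonempty: "zeros \<noteq> {}"
proof -
  obtain q r where r: "strict_mono r" "(ergodic_average \<circ> r) \<longlonglongrightarrow> q"
    using bounded_imp_convergent_subsequence[OF bounded_ergodic_average] by blast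
  have "(A z + bz) \<bullet> (z - q) \<ge> 0" if bz: "bz \<in> B z" for z bz
  proof -
    obtain bnd where bnd: "bnd \<longlonglongrightarrow> 0" "\<And>N. (A z + bz) \<bullet> (ergodic_average N - z) \<le> bnd N"
      using ergodic_minty_bound[OF bz] by blast
    have "(\<lambda>j. (A z + bz) \<bullet> ((ergodic_average \<circ> r) j - z)) \<longlonglongrightarrow> (A z + bz) \<bullet> (q - z)"
      by (intro tendsto_intros r(2))
    moreover have "(bnd \<circ> r) \<longlonglongrightarrow> 0" using LIMSEQ_subseq_LIMSEQ[OF bnd(1) r(1)] .
    ultimately have "(A z + bz) \<bullet> (q - z) \<le> 0"
      by (rule LIMSEQ_le) (use bnd(2) in auto)
    then show ?thesis by (simp add: inner_diff_right)
  qed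
  then have "q \<in> zeros" using zeros_iff_minty by blast
  then show ?thesis by blast
qed

end

section \<open>Convergence to the upper-level solutions\<close>

lemma VI_sol_nonempty:
  fixes F :: "'a::euclidean_space \<Rightarrow> 'a"
  assumes K: "compact K" "convex K" "K \<noteq> {}" and F: "continuous_on K F"
  shows "VI_sol F K \<noteq> {}"
proof -
  have closed: "closed K" using K(1) by (rule compact_imp_closed)
  let ?f = "\<lambda>x. closest_point K (x - F x)"
  have "continuous_on K ?f"
    by (rule continuous_on_compose2[OF continuous_on_closest_point[OF K(2) closed K(3)]])
       (auto intro!: continuous_intros F)
  moreover have "?f \<in> K \<rightarrow> K" using closest_point_in_set[OF closed K(3)] by auto
  ultimately obtain x where x: "x \<in> K" "?f x = x" using brouwer[OF K] by blast
  have "F x \<bullet> (w - x) \<ge> 0" if "w \<in> K" for w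
    using closest_point_dot[OF K(2) closed that, of "x - F x"] x(2) by (simp add: inner_minus_left)
  with x(1) show ?thesis unfolding VI_sol_def by blast
qed

lemma closed_VI_sol:
  assumes "closed K" "continuous_on K F"
  shows "closed (VI_sol F K)"
proof -
  have "VI_sol F K = K \<inter> (\<Inter>w\<in>K. K \<inter> (\<lambda>v. F v \<bullet> (w - v)) -` {0..})"
    unfolding VI_sol_def by auto
  moreover have "closed (K \<inter> (\<lambda>v. F v \<bullet> (w - v)) -` {0..})" for w
    using assms by (intro continuous_closed_preimage) (auto intro!: continuous_intros)
  ultimately show ?thesis using assms(1) by (simp only:) (blast intro: closed_Int closed_INT)
qed

lemma mem_VI_sol_if_paramonotone:
  assumes mono: "\<And>x y. (F x - F y) \<bullet> (x - y) \<ge> 0"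
    and para: "\<And>x y. (F x - F y) \<bullet> (x - y) = 0 \<Longrightarrow> F x = F y"
    and z: "z \<in> VI_sol F K" and x: "x \<in> K" and test: "F x \<bullet> (x - z) \<le> 0"
  shows "x \<in> VI_sol F K"
proof -
  have z_test: "F z \<bullet> (w - z) \<ge> 0" if "w \<in> K" for w using z that unfolding VI_sol_def by auto
  have "(F x - F z) \<bullet> (x - z) = 0"
    using mono[of x z] test z_test[OF x] by (simp add: inner_diff_left)
  then have Fx: "F x = F z" by (rule para)
  have "F x \<bullet> (w - x) \<ge> 0" if "w \<in> K" for w
    using z_test[OF that] z_test[OF x] test unfolding Fx by (simp add: inner_diff_right)
  with x show ?thesis unfolding VI_sol_def by blast
qed

locale fbf_bilevel = fbf_iteration A B \<gamma> K \<alpha> F lam \<xi>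
  for A :: "'e::euclidean_space \<Rightarrow> 'e" and B \<gamma> K \<alpha> F lam \<xi> +
  assumes bounded_zeros: "bounded zeros"
    and F_monotone: "\<And>x y. (F x - F y) \<bullet> (x - y) \<ge> 0"
    and F_paramonotone: "\<And>x y. (F x - F y) \<bullet> (x - y) = 0 \<Longrightarrow> F x = F y"
begin

definition upper_sol :: "'e set" where
  "upper_sol = VI_sol F zeros"

lemma compact_zeros: "compact zeros"
  using bounded_zeros closed_zeros by (simp add: compact_eq_bounded_closed)

lemma upper_sol_subset_zeros: "upper_sol \<subseteq> zeros"
  unfolding upper_sol_def VI_sol_def by auto

lemma upper_sol_nonempty: "upper_sol \<noteq> {}"
  unfolding upper_sol_def
  using compact_zeros convex_zeros zeros_nonempty continuous_on_subset[OF continuous_F]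
  by (intro VI_sol_nonempty) auto

lemma compact_upper_sol: "compact upper_sol"
proof -
  have "closed upper_sol"
    unfolding upper_sol_def
    using closed_zeros continuous_on_subset[OF continuous_F] by (intro closed_VI_sol) auto
  then show ?thesis
    using compact_zeros upper_sol_subset_zeros by (metis compact_Int_closed inf.absorb2)
qed

lemma fixed_point_mem_upper_sol:
  assumes "Ta x = x" "z \<in> upper_sol" "F x \<bullet> (x - z) \<le> 0"
  shows "x \<in> upper_sol"
proof -
  have "x \<in> zeros" using assms(1) T_alpha_fixed_iff[of \<alpha> x] alpha by simp
  with assms(2,3) show ?thesis
    unfolding upper_sol_def using mem_VI_sol_if_paramonotone[OF F_monotone F_paramonotone] by blast
qed

text \<open>The two alternatives are the two decrease terms of the iteration; by compactness and
  paramonotonicity one of them is uniformly positive away from the solution set.\<close>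

lemma uniform_progress:
  assumes X: "compact X" and e: "e > 0"
  obtains \<delta> where "\<delta> > 0" "\<And>x z. x \<in> X \<Longrightarrow> z \<in> upper_sol \<Longrightarrow> e \<le> infdist x upper_sol \<Longrightarrow>
      \<delta> \<le> norm (Ta x - x) \<or> \<delta> \<le> F (Ta x) \<bullet> (Ta x - z)"
proof -
  define W where "W = (X \<times> upper_sol) \<inter> {p. e \<le> infdist (fst p) upper_sol}"
  define g where "g p = max (norm (Ta (fst p) - fst p)) (F (Ta (fst p)) \<bullet> (Ta (fst p) - snd p))" for p
  show thesis
  proof (cases "W = {}")
    case True
    then show thesis by (intro that[of 1]) (auto simp: W_def)
  next
    case False
    have "compact W" unfolding W_def
      by (intro compact_Int_closed compact_Times X compact_upper_sol closed_Collect_le)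
         (auto intro!: continuous_intros)
    moreover have "continuous_on W g" unfolding g_def
      by (auto intro!: continuous_intros continuous_on_compose2[OF continuous_on_F_Ta]
          continuous_on_compose2[OF continuous_on_T_alpha])
    ultimately obtain p0 where p0: "p0 \<in> W" "\<And>p. p \<in> W \<Longrightarrow> g p0 \<le> g p"
      using continuous_attains_inf[OF _ False] by blast
    obtain x0 z0 where xz: "p0 = (x0, z0)" by force
    have x0: "z0 \<in> upper_sol" "e \<le> infdist x0 upper_sol" using p0(1) xz unfolding W_def by auto
    have "g p0 > 0"
    proof (rule ccontr)
      assume "\<not> g p0 > 0"
      then have "max (norm (Ta x0 - x0)) (F (Ta x0) \<bullet> (Ta x0 - z0)) \<le> 0"
        unfolding g_def xz fst_conv snd_conv not_less .
      then have "norm (Ta x0 - x0) \<le> 0" "F (Ta x0) \<bullet> (Ta x0 - z0) \<le> 0" by (simp_all only: max.bounded_iff)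
      then have "Ta x0 = x0" "F x0 \<bullet> (x0 - z0) \<le> 0" by simp_all
      then have "x0 \<in> upper_sol" using fixed_point_mem_upper_sol x0(1) by blast
      with x0(2) e show False by simp
    qed
    moreover have "g p0 \<le> norm (Ta x - x) \<or> g p0 \<le> F (Ta x) \<bullet> (Ta x - z)"
      if "x \<in> X" "z \<in> upper_sol" "e \<le> infdist x upper_sol" for x z
      using p0(2)[of "(x, z)"] that unfolding W_def g_def by (auto simp: le_max_iff_disj)
    ultimately show thesis by (rule that)
  qed
qed

lemma infdist_upper_sol_sq_le:
  obtains z where "z \<in> upper_sol"
    "infdist (\<xi> (Suc n)) upper_sol^2 \<le> infdist (\<xi> n) upper_sol^2
       - ((1 - \<alpha>) / \<alpha>) * norm (Ta (\<xi> n) - \<xi> n)^2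
       - 2 * lam (Suc n) * (F (Ta (\<xi> n)) \<bullet> (Ta (\<xi> n) - z))
       + lam (Suc n)^2 * norm (F (Ta (\<xi> n)))^2"
proof -
  obtain z where z: "z \<in> upper_sol" "infdist (\<xi> n) upper_sol = dist (\<xi> n) z"
    using infdist_attains_inf[OF compact_imp_closed[OF compact_upper_sol] upper_sol_nonempty]
    by blast
  have "infdist (\<xi> (Suc n)) upper_sol^2 \<le> norm (\<xi> (Suc n) - z)^2"
    using infdist_le[OF z(1), of "\<xi> (Suc n)"]
    by (intro power_mono) (auto simp: dist_norm infdist_nonneg)
  also have "\<dots> = norm (Ta (\<xi> n) - z)^2 - 2 * lam (Suc n) * (F (Ta (\<xi> n)) \<bullet> (Ta (\<xi> n) - z))
      + lam (Suc n)^2 * norm (F (Ta (\<xi> n)))^2"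
    by (rule iteration_dist_sq)
  also have "norm (Ta (\<xi> n) - z)^2 \<le> infdist (\<xi> n) upper_sol^2 - ((1 - \<alpha>) / \<alpha>) * norm (Ta (\<xi> n) - \<xi> n)^2"
    using T_alpha_dist_sq_le_zero[of z \<alpha> "\<xi> n"] z upper_sol_subset_zeros alpha
    by (auto simp: dist_norm)
  finally show thesis using z(1) that by simp
qed

lemma eventually_infdist_upper_sol_growth:
  obtains H where "\<forall>\<^sub>F n in sequentially.
    infdist (\<xi> (Suc n)) upper_sol^2 \<le> infdist (\<xi> n) upper_sol^2 + H * lam (Suc n)"
proof -
  obtain H M where "0 \<le> H" "0 \<le> M"
    and H: "\<And>n z. z \<in> upper_sol \<Longrightarrow> \<bar>F (Ta (\<xi> n)) \<bullet> (Ta (\<xi> n) - z)\<bar> \<le> H"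
    and M: "\<And>n. norm (F (Ta (\<xi> n)))^2 \<le> M"
    using perturbation_bounded[OF compact_imp_bounded[OF compact_upper_sol]] by blast
  have "infdist (\<xi> (Suc n)) upper_sol^2 \<le> infdist (\<xi> n) upper_sol^2 + (2 * H + M) * lam (Suc n)"
    if "lam (Suc n) < 1" for n
  proof -
    let ?l = "lam (Suc n)"
    obtain z where z: "z \<in> upper_sol" and dist: "infdist (\<xi> (Suc n)) upper_sol^2 \<le> infdist (\<xi> n) upper_sol^2
       - ((1 - \<alpha>) / \<alpha>) * norm (Ta (\<xi> n) - \<xi> n)^2
       - 2 * ?l * (F (Ta (\<xi> n)) \<bullet> (Ta (\<xi> n) - z)) + ?l^2 * norm (F (Ta (\<xi> n)))^2"
      by (rule infdist_upper_sol_sq_le)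
    have "0 \<le> ((1 - \<alpha>) / \<alpha>) * norm (Ta (\<xi> n) - \<xi> n)^2" using alpha by simp
    moreover have "- 2 * ?l * (F (Ta (\<xi> n)) \<bullet> (Ta (\<xi> n) - z)) \<le> 2 * ?l * H"
      using mult_left_mono[OF abs_le_D2[OF H[OF z, of n]] lam_nonneg[of "Suc n"]]
      by (simp add: algebra_simps)
    moreover have "?l * norm (F (Ta (\<xi> n)))^2 \<le> M"
      using mult_left_le_one_le[of "norm (F (Ta (\<xi> n)))^2" ?l] M[of n] lam_nonneg[of "Suc n"] that
      by simp
    then have "?l^2 * norm (F (Ta (\<xi> n)))^2 \<le> ?l * M"
      using mult_left_mono lam_nonneg[of "Suc n"] by (fastforce simp: power2_eq_square mult.assoc)
    ultimately show ?thesis using dist by (simp add: algebra_simps)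
  qed
  with eventually_lam_less[of 1] show thesis by (intro that[of "2 * H + M"]) (auto elim: eventually_mono)
qed

lemma eventually_infdist_upper_sol_descent:
  assumes e: "e > 0"
  obtains \<delta> where "\<delta> > 0" "\<forall>\<^sub>F n in sequentially. e \<le> infdist (\<xi> n) upper_sol \<longrightarrow>
      infdist (\<xi> (Suc n)) upper_sol^2 \<le> infdist (\<xi> n) upper_sol^2 - \<delta> * lam (Suc n)"
proof -
  obtain H M where HM: "0 \<le> H" "0 \<le> M"
    and H: "\<And>n z. z \<in> upper_sol \<Longrightarrow> \<bar>F (Ta (\<xi> n)) \<bullet> (Ta (\<xi> n) - z)\<bar> \<le> H"
    and M: "\<And>n. norm (F (Ta (\<xi> n)))^2 \<le> M"
    using perturbation_bounded[OF compact_imp_bounded[OF compact_upper_sol]] by blast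
  obtain \<delta> where \<delta>: "\<delta> > 0" and progress: "\<And>x z. x \<in> closure (range \<xi>) \<Longrightarrow> z \<in> upper_sol \<Longrightarrow>
      e \<le> infdist x upper_sol \<Longrightarrow> \<delta> \<le> norm (Ta x - x) \<or> \<delta> \<le> F (Ta x) \<bullet> (Ta x - z)"
    using uniform_progress[OF _ e] bounded_iterates by (metis compact_closure)
  define c where "c = (1 - \<alpha>) / \<alpha>"
  define \<eta> where "\<eta> = min 1 (min (c * \<delta>^2 / (2 * H + M + \<delta>)) (\<delta> / (M + 1)))"
  have c: "c > 0" using alpha by (simp add: c_def)
  have \<eta>: "\<eta> > 0" using c \<delta> HM by (simp add: \<eta>_def)
  have "infdist (\<xi> (Suc n)) upper_sol^2 \<le> infdist (\<xi> n) upper_sol^2 - \<delta> * lam (Suc n)"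
    if n: "lam (Suc n) < \<eta>" "e \<le> infdist (\<xi> n) upper_sol" for n
  proof -
    let ?l = "lam (Suc n)"
    obtain z where z: "z \<in> upper_sol" and dist: "infdist (\<xi> (Suc n)) upper_sol^2 \<le> infdist (\<xi> n) upper_sol^2
       - c * norm (Ta (\<xi> n) - \<xi> n)^2
       - 2 * ?l * (F (Ta (\<xi> n)) \<bullet> (Ta (\<xi> n) - z)) + ?l^2 * norm (F (Ta (\<xi> n)))^2"
      unfolding c_def by (rule infdist_upper_sol_sq_le)
    have l: "0 \<le> ?l" "?l \<le> 1" "?l \<le> c * \<delta>^2 / (2 * H + M + \<delta>)" "?l \<le> \<delta> / (M + 1)"
      using lam_nonneg[of "Suc n"] n(1) unfolding \<eta>_def by linarith+
    have "?l * (2 * H + M + \<delta>) \<le> c * \<delta>^2" using l(3) HM \<delta> by (simp add: le_divide_eq)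
    moreover have "?l * M \<le> \<delta>"
      using l(1,4) HM mult_left_mono[of M "M + 1" ?l] by (simp add: le_divide_eq)
    moreover have "- (F (Ta (\<xi> n)) \<bullet> (Ta (\<xi> n) - z)) \<le> H" using H[OF z] abs_le_D2 by blast
    moreover have "\<delta> \<le> norm (Ta (\<xi> n) - \<xi> n) \<or> \<delta> \<le> F (Ta (\<xi> n)) \<bullet> (Ta (\<xi> n) - z)"
      using progress[OF closure_subset[THEN subsetD] z n(2)] by simp
    ultimately show ?thesis
      using descent_estimate[OF dist] c l(1,2) M[of n] \<delta> by simp
  qed
  with eventually_lam_less[OF \<eta>] show thesis by (intro that[OF \<delta>]) (auto elim: eventually_mono)
qed

lemma tendsto_infdist_upper_sol: "(\<lambda>n. infdist (\<xi> n) upper_sol) \<longlonglongrightarrow> 0"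
proof -
  obtain H where growth: "\<forall>\<^sub>F n in sequentially.
      infdist (\<xi> (Suc n)) upper_sol^2 \<le> infdist (\<xi> n) upper_sol^2 + H * lam (Suc n)"
    by (rule eventually_infdist_upper_sol_growth)
  have "(\<lambda>n. infdist (\<xi> n) upper_sol^2) \<longlonglongrightarrow> 0"
  proof (rule tendsto_zero_by_descent[OF _ lam_nonneg lam_lim lam_not_summable growth])
    fix e :: real assume "e > 0"
    then obtain \<delta> where "\<delta> > 0" and desc: "\<forall>\<^sub>F n in sequentially. sqrt e \<le> infdist (\<xi> n) upper_sol \<longrightarrow>
        infdist (\<xi> (Suc n)) upper_sol^2 \<le> infdist (\<xi> n) upper_sol^2 - \<delta> * lam (Suc n)"
      using eventually_infdist_upper_sol_descent[of "sqrt e"] by auto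
    have "sqrt e \<le> infdist (\<xi> n) upper_sol" if "e \<le> infdist (\<xi> n) upper_sol^2" for n
      using real_sqrt_le_mono[OF that] by (simp add: infdist_nonneg)
    then have "\<forall>\<^sub>F n in sequentially. e \<le> infdist (\<xi> n) upper_sol^2 \<longrightarrow>
        infdist (\<xi> (Suc n)) upper_sol^2 \<le> infdist (\<xi> n) upper_sol^2 - \<delta> * lam (Suc n)"
      using desc by (auto elim: eventually_mono)
    with \<open>\<delta> > 0\<close> show "\<exists>\<delta>>0. \<forall>\<^sub>F n in sequentially. e \<le> infdist (\<xi> n) upper_sol^2 \<longrightarrow>
        infdist (\<xi> (Suc n)) upper_sol^2 \<le> infdist (\<xi> n) upper_sol^2 - \<delta> * lam (Suc n)"
      by blast
  qed simp
  from tendsto_real_sqrt[OF this] show ?thesis by (simp add: infdist_nonneg)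
qed

end

section \<open>Lagrange multipliers\<close>

lemma convex_image_of_affine:
  assumes S: "convex S"
    and h: "\<And>p q \<mu>. h (\<mu> *\<^sub>R p + (1 - \<mu>) *\<^sub>R q) = \<mu> *\<^sub>R h p + (1 - \<mu>) *\<^sub>R h q"
  shows "convex (h ` S)"
  unfolding convex_alt
proof (intro ballI allI impI)
  fix x y and \<mu> :: real assume "x \<in> h ` S" "y \<in> h ` S" and \<mu>: "0 \<le> \<mu> \<and> \<mu> \<le> 1"
  then obtain p q where pq: "p \<in> S" "q \<in> S" and "x = h p" "y = h q" by blast
  then have "(1 - \<mu>) *\<^sub>R x + \<mu> *\<^sub>R y = h (\<mu> *\<^sub>R q + (1 - \<mu>) *\<^sub>R p)" by (simp add: h add.commute)
  moreover have "\<mu> *\<^sub>R q + (1 - \<mu>) *\<^sub>R p \<in> S"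
    using S pq \<mu> unfolding convex_alt by (metis add.commute)
  ultimately show "(1 - \<mu>) *\<^sub>R x + \<mu> *\<^sub>R y \<in> h ` S" by simp
qed

text \<open>Separate the image of \<open>(w, e, t) \<mapsto> (L w - e, \<langle>g, w - y\<rangle> + t)\<close> on \<open>C \<times> D \<times> [0, \<infinity>)\<close>
  from the open negative half-line \<open>{0} \<times> (-\<infinity>, 0)\<close>: the two sets are disjoint exactly
  because \<open>y\<close> solves the variational inequality over \<open>{w \<in> C. L w \<in> D}\<close>.\<close>

lemma VI_separation:
  fixes L :: "'a::euclidean_space \<Rightarrow> 'g::euclidean_space"
  assumes L: "linear L" and C: "convex C" and D: "convex D"
    and y: "y \<in> C" "L y \<in> D" and VI: "\<And>w. w \<in> C \<Longrightarrow> L w \<in> D \<Longrightarrow> g \<bullet> (w - y) \<ge> 0"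
  obtains d \<beta> where "(d, \<beta>) \<noteq> 0" "\<beta> \<le> 0"
    "\<And>w e. w \<in> C \<Longrightarrow> e \<in> D \<Longrightarrow> d \<bullet> (L w - e) + \<beta> * (g \<bullet> (w - y)) \<le> 0"
proof -
  define h :: "'a \<times> 'g \<times> real \<Rightarrow> 'g \<times> real" where "h = (\<lambda>(w, e, t). (L w - e, g \<bullet> (w - y) + t))"
  define W1 where "W1 = h ` (C \<times> D \<times> {0..})"
  define W2 :: "('g \<times> real) set" where "W2 = (\<lambda>s. (0, s)) ` {..<0}"
  have "h (\<mu> *\<^sub>R p + (1 - \<mu>) *\<^sub>R q) = \<mu> *\<^sub>R h p + (1 - \<mu>) *\<^sub>R h q" for p q \<mu>
    using L by (cases p, cases q) (simp add: h_def linear_add linear_diff linear_scale inner_simps algebra_simps)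
  then have "convex W1" unfolding W1_def
    by (rule convex_image_of_affine[rotated]) (intro convex_Times C D convex_real_interval)
  moreover have "convex W2" unfolding W2_def
    by (rule convex_image_of_affine) (auto simp: algebra_simps)
  moreover have "(0, 0) \<in> W1" unfolding W1_def h_def using y by (force intro!: image_eqI[of _ _ "(y, L y, 0)"])
  moreover have "(0, -1) \<in> W2" unfolding W2_def by force
  moreover have "W1 \<inter> W2 = {}"
    using VI unfolding W1_def W2_def h_def by (force simp: add_nonneg_pos)
  ultimately obtain a b where a: "a \<noteq> 0" "\<forall>x\<in>W1. a \<bullet> x \<le> b" "\<forall>x\<in>W2. a \<bullet> x \<ge> b"
    using separating_hyperplane_sets[of W1 W2] by blast
  obtain d \<beta> where a_eq: "a = (d, \<beta>)" by force
  have W1_le: "d \<bullet> (L w - e) + \<beta> * (g \<bullet> (w - y) + t) \<le> b" if "w \<in> C" "e \<in> D" "t \<ge> 0" for w e t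
    using a(2) that unfolding W1_def h_def a_eq by force
  have W2_ge: "\<beta> * s \<ge> b" if "s < 0" for s
    using a(3) that unfolding W2_def a_eq by force
  have "b \<ge> 0" using W1_le[OF y, of 0] by simp
  then have \<beta>: "\<beta> \<le> 0" using W2_ge[of "-1"] by simp
  have "b \<le> 0"
  proof (rule ccontr)
    assume "\<not> b \<le> 0"
    then have "\<beta> < 0" using W2_ge[of "-1"] \<beta> by linarith
    with \<open>\<not> b \<le> 0\<close> show False
      using W2_ge[of "b / (2 * \<beta>)"] by (simp add: divide_pos_neg field_simps)
  qed
  then show thesis using a(1) \<beta> W1_le[where t = 0] unfolding a_eq
    by (intro that[of d \<beta>]) (auto intro: order_trans)
qed

lemma VI_multiplier:
  fixes L :: "'a::euclidean_space \<Rightarrow> 'g::euclidean_space"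
  assumes L: "linear L" and C: "convex C" and D: "convex D"
    and y: "y \<in> C" "L y \<in> D" and VI: "\<And>w. w \<in> C \<Longrightarrow> L w \<in> D \<Longrightarrow> g \<bullet> (w - y) \<ge> 0"
    and CQ: "\<And>d. (\<And>w e. w \<in> C \<Longrightarrow> e \<in> D \<Longrightarrow> d \<bullet> (L w - e) \<le> 0) \<Longrightarrow> d = 0"
  obtains v where "\<And>c. c \<in> C \<Longrightarrow> (g + adjoint L v) \<bullet> (c - y) \<ge> 0" "\<And>e. e \<in> D \<Longrightarrow> (e - L y) \<bullet> v \<le> 0"
proof -
  obtain d \<beta> where d\<beta>: "(d, \<beta>) \<noteq> 0" "\<beta> \<le> 0"
    and sep: "\<And>w e. w \<in> C \<Longrightarrow> e \<in> D \<Longrightarrow> d \<bullet> (L w - e) + \<beta> * (g \<bullet> (w - y)) \<le> 0"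
    using VI_separation[OF L C D y VI] by blast
  have "\<beta> \<noteq> 0"
  proof
    assume "\<beta> = 0"
    with sep have "d = 0" by (intro CQ) simp
    with \<open>\<beta> = 0\<close> d\<beta>(1) show False by (simp add: zero_prod_def)
  qed
  with d\<beta>(2) have \<beta>: "\<beta> < 0" by simp
  define v where "v = (1 / \<beta>) *\<^sub>R d"
  have "(g + adjoint L v) \<bullet> (c - y) \<ge> 0" if c: "c \<in> C" for c
  proof -
    have "adjoint L v \<bullet> (c - y) = (1 / \<beta>) * (d \<bullet> (L c - L y))"
      using adjoint_works[OF L, of "c - y" v] L
      by (simp add: v_def inner_commute linear_diff)
    then have "\<beta> * (adjoint L v \<bullet> (c - y)) = d \<bullet> (L c - L y)" using \<beta> by simp
    then have "\<beta> * ((g + adjoint L v) \<bullet> (c - y)) = d \<bullet> (L c - L y) + \<beta> * (g \<bullet> (c - y))"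
      by (simp add: inner_add_left distrib_left)
    also have "\<dots> \<le> 0" using sep[OF c y(2)] .
    finally show ?thesis using \<beta> by (simp add: mult_le_0_iff)
  qed
  moreover have "(e - L y) \<bullet> v \<le> 0" if e: "e \<in> D" for e
  proof -
    have "d \<bullet> (L y - e) \<le> 0" using sep[OF y(1) e] by simp
    then show ?thesis using \<beta> by (simp add: v_def inner_commute inner_diff_left inner_diff_right divide_nonneg_neg)
  qed
  ultimately show thesis by (rule that)
qed

section \<open>The constrained game\<close>

definition prod_set :: "nat \<Rightarrow> (nat \<Rightarrow> 'a \<Rightarrow> 'a) \<Rightarrow> (nat \<Rightarrow> 'a set) \<Rightarrow> 'a set" where
  "prod_set m P C = {x. \<forall>i\<in>{1..m}. P i x \<in> C i}"

context
  fixes m :: nat and P :: "nat \<Rightarrow> 'a::euclidean_space \<Rightarrow> 'a"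
  assumes decomp: "orth_decomp m P"
begin

lemma linear_proj: "i \<in> {1..m} \<Longrightarrow> linear (P i)"
  using decomp unfolding orth_decomp_def by blast

lemma proj_idem: "i \<in> {1..m} \<Longrightarrow> P i (P i x) = P i x"
  using decomp unfolding orth_decomp_def by blast

lemma proj_self_adjoint: "i \<in> {1..m} \<Longrightarrow> P i x \<bullet> y = x \<bullet> P i y"
  using decomp unfolding orth_decomp_def by blast

lemma proj_orthogonal: "i \<in> {1..m} \<Longrightarrow> j \<in> {1..m} \<Longrightarrow> i \<noteq> j \<Longrightarrow> P i (P j x) = 0"
  using decomp unfolding orth_decomp_def by blast

lemma sum_proj: "(\<Sum>i\<in>{1..m}. P i x) = x"
  using decomp unfolding orth_decomp_def by blast

lemma proj_range_eq: "i \<in> {1..m} \<Longrightarrow> c \<in> range (P i) \<Longrightarrow> P i c = c"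
  using proj_idem by auto

lemma proj_range_other:
  "i \<in> {1..m} \<Longrightarrow> j \<in> {1..m} \<Longrightarrow> i \<noteq> j \<Longrightarrow> c \<in> range (P j) \<Longrightarrow> P i c = 0"
  using proj_orthogonal by auto

lemma inner_eq_sum_proj: "a \<bullet> y = (\<Sum>i\<in>{1..m}. P i a \<bullet> P i y)"
proof -
  have "a \<bullet> y = a \<bullet> (\<Sum>i\<in>{1..m}. P i y)" by (simp only: sum_proj)
  also have "\<dots> = (\<Sum>i\<in>{1..m}. P i a \<bullet> P i y)"
    unfolding inner_sum_right by (rule sum.cong) (auto simp: proj_self_adjoint proj_idem)
  finally show ?thesis .
qed

lemma repl_mem_prod_set:
  assumes C: "\<forall>i\<in>{1..m}. C i \<subseteq> range (P i)"
    and x: "x \<in> prod_set m P C" and i: "i \<in> {1..m}" and c: "c \<in> C i"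
  shows "repl (P i) x c \<in> prod_set m P C"
  unfolding prod_set_def mem_Collect_eq
proof
  fix j assume j: "j \<in> {1..m}"
  have c_range: "c \<in> range (P i)" using C c i by blast
  have "P j (repl (P i) x c) = P j x - P j (P i x) + P j c"
    using linear_proj[OF j] by (simp add: repl_def linear_diff linear_add)
  then show "P j (repl (P i) x c) \<in> C j"
    using x j c proj_idem[OF i] proj_range_eq[OF i c_range]
      proj_range_other[OF j i _ c_range] proj_range_other[OF j i _ rangeI]
    unfolding prod_set_def by (cases "j = i") auto
qed

lemma prod_set_nonempty_closed_convex:
  assumes C: "\<forall>i\<in>{1..m}. C i \<subseteq> range (P i) \<and> C i \<noteq> {} \<and> closed (C i) \<and> convex (C i)"
  shows "prod_set m P C \<noteq> {}" "closed (prod_set m P C)" "convex (prod_set m P C)"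
proof -
  have eq: "prod_set m P C = (\<Inter>i\<in>{1..m}. P i -` C i)" unfolding prod_set_def by auto
  have "closed (P i -` C i)" if i: "i \<in> {1..m}" for i
  proof (rule continuous_closed_vimage)
    show "closed (C i)" using C i by blast
    show "continuous (at x) (P i)" for x
      using linear_proj[OF i] by (simp add: linear_conv_bounded_linear linear_continuous_at)
  qed
  then show "closed (prod_set m P C)" unfolding eq by (intro closed_INT) blast
  show "convex (prod_set m P C)"
    unfolding eq using C linear_proj by (intro convex_INT convex_linear_vimage) auto
  define c where "c i = (SOME y. y \<in> C i)" for i
  have c: "c i \<in> C i" if "i \<in> {1..m}" for i using C that by (auto simp: c_def some_in_eq)
  have "P j (\<Sum>i\<in>{1..m}. c i) = c j" if j: "j \<in> {1..m}" for j
  proof -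
    have "P j (\<Sum>i\<in>{1..m}. c i) = (\<Sum>i\<in>{1..m}. if i = j then c j else 0)"
      unfolding linear_sum[OF linear_proj[OF j]]
    proof (rule sum.cong)
      fix i assume i: "i \<in> {1..m}"
      then have "C i \<subseteq> range (P i)" using C by blast
      then have "c i \<in> range (P i)" using c[OF i] by (rule subsetD)
      then show "P j (c i) = (if i = j then c j else 0)"
      proof (cases "i = j")
        case True
        with \<open>c i \<in> range (P i)\<close> show ?thesis using proj_range_eq[OF j, of "c j"] by simp
      next
        case False
        with \<open>c i \<in> range (P i)\<close> show ?thesis using proj_range_other[OF j i, of "c i"] by simp
      qed
    qed simp
    also have "\<dots> = c j" using j by simp
    finally show ?thesis .
  qed
  then have "(\<Sum>i\<in>{1..m}. c i) \<in> prod_set m P C" unfolding prod_set_def using c by auto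
  then show "prod_set m P C \<noteq> {}" by blast
qed

lemma normal_cone_prod_set_iff:
  assumes C: "\<forall>i\<in>{1..m}. C i \<subseteq> range (P i)"
  shows "(\<forall>i\<in>{1..m}. P i a \<in> normal_cone (range (P i)) (C i) (P i x)) \<longleftrightarrow>
         x \<in> prod_set m P C \<and> (\<forall>c\<in>prod_set m P C. a \<bullet> (c - x) \<le> 0)"
proof
  assume normal: "\<forall>i\<in>{1..m}. P i a \<in> normal_cone (range (P i)) (C i) (P i x)"
  then have x: "x \<in> prod_set m P C"
    unfolding prod_set_def normal_cone_def by (auto split: if_splits)
  have "a \<bullet> (c - x) \<le> 0" if c: "c \<in> prod_set m P C" for c
  proof -
    have "P i a \<bullet> P i (c - x) \<le> 0" if i: "i \<in> {1..m}" for i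
    proof -
      have "P i x \<in> C i" "P i c \<in> C i" using x c i unfolding prod_set_def by auto
      moreover have "P i a \<in> normal_cone (range (P i)) (C i) (P i x)" using normal i by blast
      ultimately have "P i a \<bullet> (P i c - P i x) \<le> 0" by (simp add: normal_cone_def)
      then show ?thesis by (simp add: linear_diff[OF linear_proj[OF i]])
    qed
    then have "(\<Sum>i\<in>{1..m}. P i a \<bullet> P i (c - x)) \<le> 0" by (intro sum_nonpos) auto
    then show ?thesis by (simp only: inner_eq_sum_proj[symmetric])
  qed
  with x show "x \<in> prod_set m P C \<and> (\<forall>c\<in>prod_set m P C. a \<bullet> (c - x) \<le> 0)" by blast
next
  assume h: "x \<in> prod_set m P C \<and> (\<forall>c\<in>prod_set m P C. a \<bullet> (c - x) \<le> 0)"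
  show "\<forall>i\<in>{1..m}. P i a \<in> normal_cone (range (P i)) (C i) (P i x)"
  proof
    fix i assume i: "i \<in> {1..m}"
    have "P i a \<bullet> (c - P i x) \<le> 0" if c: "c \<in> C i" for c
    proof -
      have "repl (P i) x c \<in> prod_set m P C" using h repl_mem_prod_set[OF C _ i c] by blast
      then have "a \<bullet> (repl (P i) x c - x) \<le> 0" using h by blast
      then have le: "a \<bullet> (c - P i x) \<le> 0" by (simp add: repl_def)
      have "c \<in> range (P i)" using C c i by blast
      then have "P i (c - P i x) = c - P i x"
        using linear_diff[OF linear_proj[OF i]] proj_idem[OF i] proj_range_eq[OF i, of c] by simp
      with le show ?thesis using proj_self_adjoint[OF i, of a "c - P i x"] by simp
    qed
    then show "P i a \<in> normal_cone (range (P i)) (C i) (P i x)"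
      using h i unfolding normal_cone_def prod_set_def by auto
  qed
qed

end

lemma conjugate_iota: "conjugate (iota D) u = (SUP y\<in>D. ereal (y \<bullet> u))"
  unfolding conjugate_def
proof (rule antisym)
  show "(SUP y. ereal (y \<bullet> u) - iota D y) \<le> (SUP y\<in>D. ereal (y \<bullet> u))"
    by (rule SUP_least) (auto simp: iota_def intro: SUP_upper)
  show "(SUP y\<in>D. ereal (y \<bullet> u)) \<le> (SUP y. ereal (y \<bullet> u) - iota D y)"
  proof (rule SUP_least)
    fix y assume "y \<in> D"
    then have "ereal (y \<bullet> u) = ereal (y \<bullet> u) - iota D y" by (simp add: iota_def)
    also have "\<dots> \<le> (SUP y. ereal (y \<bullet> u) - iota D y)" by (rule SUP_upper) simp
    finally show "ereal (y \<bullet> u) \<le> (SUP y. ereal (y \<bullet> u) - iota D y)" .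
  qed
qed

lemma mem_if_subgradient_of_support:
  fixes D :: "'g::euclidean_space set"
  assumes D: "closed D" "convex D" and sup: "\<And>e. e \<in> D \<Longrightarrow> e \<bullet> u \<le> s"
    and sub: "\<And>w. ereal s + ereal (b \<bullet> (w - u)) \<le> conjugate (iota D) w"
  shows "b \<in> D"
proof (rule ccontr)
  assume "b \<notin> D"
  then obtain a \<beta> where ab: "a \<bullet> b < \<beta>" "\<forall>x\<in>D. a \<bullet> x > \<beta>"
    using separating_hyperplane_closed_point[OF D(2) D(1)] by blast
  have "conjugate (iota D) (u - a) \<le> ereal (s - \<beta>)"
    unfolding conjugate_iota
  proof (rule SUP_least)
    fix e assume "e \<in> D"
    then show "ereal (e \<bullet> (u - a)) \<le> ereal (s - \<beta>)"
      using sup ab(2) by (fastforce simp: inner_diff_right inner_commute)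
  qed
  with sub[of "u - a"] have "s + b \<bullet> (u - a - u) \<le> s - \<beta>"
    by (metis order_trans plus_ereal.simps(1) ereal_less_eq(3))
  with ab(1) show False by (simp add: inner_commute)
qed

lemma subdiff_conjugate_iota_iff:
  fixes D :: "'g::euclidean_space set"
  assumes D: "D \<noteq> {}" "closed D" "convex D"
  shows "b \<in> subdiff (conjugate (iota D)) u \<longleftrightarrow> b \<in> D \<and> (\<forall>e\<in>D. (e - b) \<bullet> u \<le> 0)"
proof
  assume b: "b \<in> D \<and> (\<forall>e\<in>D. (e - b) \<bullet> u \<le> 0)"
  have u: "conjugate (iota D) u = ereal (b \<bullet> u)"
    unfolding conjugate_iota
    by (rule antisym, rule SUP_least) (use b in \<open>auto simp: inner_diff_left intro: SUP_upper\<close>)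
  have "conjugate (iota D) u + ereal (b \<bullet> (w - u)) \<le> conjugate (iota D) w" for w
  proof -
    have "conjugate (iota D) u + ereal (b \<bullet> (w - u)) = ereal (b \<bullet> w)"
      unfolding u by (simp add: inner_diff_right inner_commute)
    also have "\<dots> \<le> conjugate (iota D) w"
      unfolding conjugate_iota using b by (auto simp: inner_commute intro: SUP_upper)
    finally show ?thesis .
  qed
  then show "b \<in> subdiff (conjugate (iota D)) u" unfolding subdiff_def u by simp
next
  assume "b \<in> subdiff (conjugate (iota D)) u"
  then obtain s where s: "conjugate (iota D) u = ereal s"
    and sub: "\<And>w. ereal s + ereal (b \<bullet> (w - u)) \<le> conjugate (iota D) w"
    unfolding subdiff_def by (cases "conjugate (iota D) u") auto
  have sup: "e \<bullet> u \<le> s" if "e \<in> D" for e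
    using SUP_upper[OF that, of "\<lambda>y. ereal (y \<bullet> u)"] unfolding conjugate_iota[symmetric] s by simp
  have "b \<in> D" using D(2,3) sup sub by (rule mem_if_subgradient_of_support)
  moreover have "conjugate (iota D) 0 = 0" unfolding conjugate_iota using D(1) by simp
  with sub[of 0] have "s \<le> b \<bullet> u" by (simp add: zero_ereal_def)
  with sup have "\<forall>e\<in>D. (e - b) \<bullet> u \<le> 0" by (auto simp: inner_diff_left intro: order_trans)
  ultimately show "b \<in> D \<and> (\<forall>e\<in>D. (e - b) \<bullet> u \<le> 0)" by blast
qed

lemma norm_adjoint_le:
  fixes L :: "'a::euclidean_space \<Rightarrow> 'g::euclidean_space"
  assumes L: "linear L"
  shows "norm (adjoint L u) \<le> onorm L * norm u"
proof -
  have bl: "bounded_linear L" using L by (simp add: linear_conv_bounded_linear)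
  have "norm (adjoint L u) * norm (adjoint L u) = adjoint L u \<bullet> adjoint L u"
    by (simp add: power2_norm_eq_inner flip: power2_eq_square)
  also have "\<dots> = L (adjoint L u) \<bullet> u" by (rule adjoint_works[OF L])
  also have "\<dots> \<le> norm (L (adjoint L u)) * norm u" by (rule norm_cauchy_schwarz)
  also have "\<dots> \<le> norm (adjoint L u) * (onorm L * norm u)"
    using mult_right_mono[OF onorm[OF bl, of "adjoint L u"] norm_ge_zero[of u]] by (simp add: algebra_simps)
  finally show ?thesis
    using onorm_pos_le[OF bl] by (cases "adjoint L u = 0") (auto simp: mult_le_cancel_left_pos)
qed

locale constrained_game =
  fixes m :: nat and P :: "nat \<Rightarrow> 'a::euclidean_space \<Rightarrow> 'a" and C :: "nat \<Rightarrow> 'a set"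
    and D :: "'g::euclidean_space set" and L :: "'a \<Rightarrow> 'g"
  assumes decomp: "orth_decomp m P"
    and C: "\<forall>i\<in>{1..m}. C i \<subseteq> range (P i) \<and> C i \<noteq> {} \<and> closed (C i) \<and> convex (C i)"
    and D: "D \<noteq> {}" "closed D" "convex D"
    and L: "linear L"
begin

abbreviation C_prod :: "'a set" where
  "C_prod \<equiv> prod_set m P C"

lemma C_prod_nonempty_closed_convex: "C_prod \<noteq> {}" "closed C_prod" "convex C_prod"
  using prod_set_nonempty_closed_convex[OF decomp C] by auto

lemma opB_iff:
  "(a, b) \<in> opB m P C D (x, u) \<longleftrightarrow>
     x \<in> C_prod \<and> (\<forall>c\<in>C_prod. a \<bullet> (c - x) \<le> 0) \<and> b \<in> D \<and> (\<forall>e\<in>D. (e - b) \<bullet> u \<le> 0)"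
proof -
  have "\<forall>i\<in>{1..m}. C i \<subseteq> range (P i)" using C by blast
  have "(a, b) \<in> opB m P C D (x, u) \<longleftrightarrow>
      (\<forall>i\<in>{1..m}. P i a \<in> normal_cone (range (P i)) (C i) (P i x)) \<and> b \<in> subdiff (conjugate (iota D)) u"
    unfolding opB_def by simp
  also have "\<dots> \<longleftrightarrow> x \<in> C_prod \<and> (\<forall>c\<in>C_prod. a \<bullet> (c - x) \<le> 0) \<and> b \<in> D \<and> (\<forall>e\<in>D. (e - b) \<bullet> u \<le> 0)"
    unfolding normal_cone_prod_set_iff[OF decomp \<open>\<forall>i\<in>{1..m}. C i \<subseteq> range (P i)\<close>]
      subdiff_conjugate_iota_iff[OF D] by blast
  finally show ?thesis .
qed

lemma opB_monotone:
  assumes "p \<in> opB m P C D z" "q \<in> opB m P C D z'"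
  shows "(p - q) \<bullet> (z - z') \<ge> 0"
proof -
  obtain x u x' u' a b a' b' where eq: "z = (x, u)" "z' = (x', u')" "p = (a, b)" "q = (a', b')"
    by (metis prod.exhaust)
  from assms have "a \<bullet> (x' - x) \<le> 0" "a' \<bullet> (x - x') \<le> 0" "(b' - b) \<bullet> u \<le> 0" "(b - b') \<bullet> u' \<le> 0"
    unfolding eq opB_iff by auto
  then show ?thesis unfolding eq by (simp add: inner_simps)
qed

text \<open>The resolvent of \<open>\<gamma>B\<close> is explicit: the projection onto \<open>C_prod\<close> in the primal variable and
  the Moreau decomposition through the projection onto \<open>D\<close> in the dual variable.\<close>

lemma opB_range:
  assumes "\<gamma> > 0"
  shows "\<exists>w. \<exists>b\<in>opB m P C D w. z = w + \<gamma> *\<^sub>R b"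
proof -
  obtain z1 z2 where z: "z = (z1, z2)" by force
  define w1 where "w1 = closest_point C_prod z1"
  define b2 where "b2 = closest_point D ((1 / \<gamma>) *\<^sub>R z2)"
  have w1: "w1 \<in> C_prod" unfolding w1_def using C_prod_nonempty_closed_convex by (intro closest_point_in_set) auto
  have b2: "b2 \<in> D" unfolding b2_def using D by (intro closest_point_in_set) auto
  have "((1 / \<gamma>) *\<^sub>R (z1 - w1)) \<bullet> (c - w1) \<le> 0" if "c \<in> C_prod" for c
    using closest_point_dot[OF C_prod_nonempty_closed_convex(3,2) that, of z1] assms unfolding w1_def
    by (simp add: divide_nonpos_pos)
  moreover have "(e - b2) \<bullet> (z2 - \<gamma> *\<^sub>R b2) \<le> 0" if "e \<in> D" for e
  proof -
    have "z2 - \<gamma> *\<^sub>R b2 = \<gamma> *\<^sub>R ((1 / \<gamma>) *\<^sub>R z2 - b2)" using assms by (simp add: algebra_simps)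
    then show ?thesis
      using closest_point_dot[OF D(3,2) that, of "(1 / \<gamma>) *\<^sub>R z2"] assms unfolding b2_def
      by (simp add: inner_commute mult_nonneg_nonpos)
  qed
  ultimately have "((1 / \<gamma>) *\<^sub>R (z1 - w1), b2) \<in> opB m P C D (w1, z2 - \<gamma> *\<^sub>R b2)"
    unfolding opB_iff using w1 b2 by blast
  moreover have "z = (w1, z2 - \<gamma> *\<^sub>R b2) + \<gamma> *\<^sub>R ((1 / \<gamma>) *\<^sub>R (z1 - w1), b2)"
    unfolding z using assms by simp
  ultimately show ?thesis by blast
qed

lemma opA_monotone:
  assumes "\<And>x y. (G x - G y) \<bullet> (x - y) \<ge> 0"
  shows "(opA G L z - opA G L z') \<bullet> (z - z') \<ge> 0"
proof -
  obtain x u x' u' where eq: "z = (x, u)" "z' = (x', u')" by force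
  have "(adjoint L u - adjoint L u') \<bullet> (x - x') = (L x - L x') \<bullet> (u - u')"
    using adjoint_works[OF L, of "x - x'" "u - u'"] L adjoint_linear[OF L]
    by (simp add: inner_commute linear_diff)
  then have "(opA G L z - opA G L z') \<bullet> (z - z') = (G x - G x') \<bullet> (x - x')"
    unfolding eq opA_def by (simp add: inner_simps)
  with assms show ?thesis by simp
qed

lemma opA_lipschitz:
  assumes lip: "\<And>x y. norm (G x - G y) \<le> \<kappa> * norm (x - y)" and "\<kappa> \<ge> 0"
  shows "norm (opA G L z - opA G L z') \<le> (\<kappa> + onorm L) * norm (z - z')"
proof -
  obtain x u x' u' where eq: "z = (x, u)" "z' = (x', u')" by force
  have bl: "bounded_linear L" using L by (simp add: linear_conv_bounded_linear)
  define p where "p = adjoint L (u - u')"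
  define q where "q = - L (x - x')"
  have "opA G L z - opA G L z' = (G x - G x', 0) + (p, q)"
    unfolding eq opA_def p_def q_def using L adjoint_linear[OF L] by (simp add: linear_diff)
  then have "norm (opA G L z - opA G L z') \<le> norm (G x - G x') + norm (p, q)"
    using norm_triangle_ineq[of "(G x - G x', 0::'g)" "(p, q)"] by (simp add: norm_Pair)
  also have "norm (G x - G x') \<le> \<kappa> * norm (z - z')"
  proof -
    have "norm (x - x') \<le> norm (z - z')" unfolding eq using norm_fst_le[of "x - x'" "u - u'"] by simp
    with lip[of x x'] assms(2) show ?thesis by (meson mult_left_mono order_trans)
  qed
  also have "norm (p, q) \<le> onorm L * norm (z - z')"
  proof -
    have "norm p \<le> onorm L * norm (u - u')" unfolding p_def by (rule norm_adjoint_le[OF L])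
    moreover have "norm q \<le> onorm L * norm (x - x')" unfolding q_def using onorm[OF bl] by simp
    ultimately have "norm (p, q)^2 \<le> (onorm L * norm (u - u'))^2 + (onorm L * norm (x - x'))^2"
      unfolding norm_Pair by (simp add: add_mono power_mono)
    also have "\<dots> = (onorm L * norm (z - z'))^2"
      unfolding eq by (simp add: norm_Pair power_mult_distrib algebra_simps)
    finally show ?thesis by (rule power2_le_imp_le) (simp add: onorm_pos_le[OF bl])
  qed
  finally show ?thesis by (simp add: algebra_simps)
qed

lemma fbf_splitting_opA_opB:
  assumes mono: "\<And>x y. (G x - G y) \<bullet> (x - y) \<ge> 0"
    and lip: "\<And>x y. norm (G x - G y) \<le> \<kappa> * norm (x - y)"
    and \<kappa>: "\<kappa> > 0" and \<gamma>: "0 < \<gamma>" "\<gamma> < 1 / (\<kappa> + onorm L)"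
  shows "fbf_splitting (opA G L) (opB m P C D) \<gamma> (\<kappa> + onorm L)"
proof
  have "onorm L \<ge> 0" using L by (simp add: linear_conv_bounded_linear onorm_pos_le)
  then show "\<kappa> + onorm L \<ge> 0" "\<gamma> * (\<kappa> + onorm L) < 1"
    using \<kappa> \<gamma>(2) by (simp_all add: less_divide_eq)
  show "(opA G L z - opA G L z') \<bullet> (z - z') \<ge> 0" for z z'
    using mono by (rule opA_monotone)
  show "norm (opA G L z - opA G L z') \<le> (\<kappa> + onorm L) * norm (z - z')" for z z'
    using lip \<kappa> by (intro opA_lipschitz) auto
  show "(p - q) \<bullet> (z - z') \<ge> 0" if "p \<in> opB m P C D z" "q \<in> opB m P C D z'" for z z' p q
    using that by (rule opB_monotone)
  show "\<exists>w. \<exists>b\<in>opB m P C D w. z = w + \<gamma> *\<^sub>R b" for z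
    using \<gamma>(1) by (rule opB_range)
qed (rule \<gamma>(1))

definition kkt_points :: "('a \<Rightarrow> 'a) \<Rightarrow> ('a \<times> 'g) set" where
  "kkt_points G = {(x, u). x \<in> C_prod \<and> (\<forall>c\<in>C_prod. (G x + adjoint L u) \<bullet> (c - x) \<ge> 0)
                          \<and> L x \<in> D \<and> (\<forall>e\<in>D. (e - L x) \<bullet> u \<le> 0)}"

lemma zeros_opA_opB:
  assumes "fbf_splitting (opA G L) (opB m P C D) \<gamma> K"
  shows "fbf_splitting.zeros (opA G L) (opB m P C D) = kkt_points G"
proof (rule set_eqI)
  fix z :: "'a \<times> 'g"
  obtain x u where z: "z = (x, u)" by force
  have "- opA G L z = (- (G x + adjoint L u), L x)" unfolding z opA_def by simp
  moreover have "(- (G x + adjoint L u), L x) \<in> opB m P C D (x, u) \<longleftrightarrow> (x, u) \<in> kkt_points G"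
    unfolding opB_iff kkt_points_def
    by (simp only: inner_minus_left neg_le_0_iff_le mem_Collect_eq prod.case)
  ultimately show "z \<in> fbf_splitting.zeros (opA G L) (opB m P C D) \<longleftrightarrow> z \<in> kkt_points G"
    unfolding fbf_splitting.zeros_def[OF assms] z by simp
qed

lemma fst_kkt_points_subset: "fst ` kkt_points G \<subseteq> VI_sol G (feas m P C L D)"
proof clarify
  fix x u assume xu: "(x, u) \<in> kkt_points G"
  have "G x \<bullet> (w - x) \<ge> 0" if w: "w \<in> C_prod" "L w \<in> D" for w
  proof -
    have "adjoint L u \<bullet> (w - x) = (L w - L x) \<bullet> u"
      using adjoint_works[OF L, of "w - x" u] L by (simp add: inner_commute linear_diff)
    moreover have "(G x + adjoint L u) \<bullet> (w - x) \<ge> 0" "(L w - L x) \<bullet> u \<le> 0"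
      using xu w unfolding kkt_points_def by auto
    ultimately show ?thesis by (simp add: inner_add_left)
  qed
  then show "fst (x, u) \<in> VI_sol G (feas m P C L D)"
    using xu unfolding kkt_points_def VI_sol_def feas_def prod_set_def by auto
qed

lemma kkt_points_ray:
  assumes xu: "(x, u) \<in> kkt_points G" and "k \<ge> 0"
    and d: "\<And>w e. w \<in> C_prod \<Longrightarrow> e \<in> D \<Longrightarrow> d \<bullet> (L w - e) \<le> 0"
  shows "(x, u - k *\<^sub>R d) \<in> kkt_points G"
proof -
  have adj: "adjoint L d \<bullet> (c - x) = d \<bullet> (L c - L x)" for c
    using adjoint_works[OF L, of "c - x" d] L by (simp add: inner_commute linear_diff)
  have "adjoint L (u - k *\<^sub>R d) = adjoint L u - k *\<^sub>R adjoint L d"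
    using adjoint_linear[OF L] by (simp add: linear_diff linear_scale)
  have "(G x + adjoint L (u - k *\<^sub>R d)) \<bullet> (c - x) \<ge> 0" if "c \<in> C_prod" for c
  proof -
    have "(G x + adjoint L u) \<bullet> (c - x) \<ge> 0" "d \<bullet> (L c - L x) \<le> 0"
      using xu d \<open>c \<in> C_prod\<close> unfolding kkt_points_def by auto
    moreover have "(G x + adjoint L (u - k *\<^sub>R d)) \<bullet> (c - x)
        = (G x + adjoint L u) \<bullet> (c - x) - k * (d \<bullet> (L c - L x))"
      unfolding \<open>adjoint L (u - k *\<^sub>R d) = _\<close> by (simp add: inner_diff_left inner_add_left adj)
    ultimately show ?thesis using mult_left_mono[of "d \<bullet> (L c - L x)" 0 k] \<open>k \<ge> 0\<close> by simp
  qed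
  moreover have "(e - L x) \<bullet> (u - k *\<^sub>R d) \<le> 0" if "e \<in> D" for e
  proof -
    have "(e - L x) \<bullet> u \<le> 0" "d \<bullet> (L x - e) \<le> 0"
      using xu d \<open>e \<in> D\<close> unfolding kkt_points_def by auto
    moreover have "(e - L x) \<bullet> (u - k *\<^sub>R d) = (e - L x) \<bullet> u + k * (d \<bullet> (L x - e))"
      by (simp add: inner_diff_right inner_diff_left inner_commute algebra_simps)
    ultimately show ?thesis using mult_left_mono[of "d \<bullet> (L x - e)" 0 k] \<open>k \<ge> 0\<close> by simp
  qed
  ultimately show ?thesis using xu unfolding kkt_points_def by blast
qed

lemma kkt_constraint_qualification:
  assumes bounded: "bounded (kkt_points G)" and xu: "(x, u) \<in> kkt_points G"
    and d: "\<And>w e. w \<in> C_prod \<Longrightarrow> e \<in> D \<Longrightarrow> d \<bullet> (L w - e) \<le> 0"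
  shows "d = 0"
proof (rule ccontr)
  assume "d \<noteq> 0"
  have "(x, u - k *\<^sub>R d) \<in> kkt_points G" if "k \<ge> 0" for k
    using xu that d by (rule kkt_points_ray)
  moreover obtain R where R: "\<And>z. z \<in> kkt_points G \<Longrightarrow> norm z \<le> R"
    using bounded unfolding bounded_iff by blast
  define k where "k = (R + norm u + 1) / norm d"
  have "k \<ge> 0" "k * norm d = R + norm u + 1"
    using \<open>d \<noteq> 0\<close> R[OF xu] order_trans[OF norm_ge_zero R[OF xu]] by (auto simp: k_def)
  ultimately have "norm (u - k *\<^sub>R d) \<le> R"
    using R norm_snd_le[of "u - k *\<^sub>R d" x] by (meson order_trans)
  moreover have "norm (k *\<^sub>R d) \<le> norm u + norm (u - k *\<^sub>R d)"
    using norm_triangle_ineq4[of u "u - k *\<^sub>R d"] by simp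
  ultimately show False using \<open>k \<ge> 0\<close> \<open>k * norm d = R + norm u + 1\<close> by simp
qed

lemma fst_kkt_points_eq:
  assumes "bounded (kkt_points G)" "kkt_points G \<noteq> {}"
  shows "fst ` kkt_points G = VI_sol G (feas m P C L D)"
proof
  show "VI_sol G (feas m P C L D) \<subseteq> fst ` kkt_points G"
  proof
    fix y assume "y \<in> VI_sol G (feas m P C L D)"
    then have y: "y \<in> C_prod" "L y \<in> D" "\<And>w. w \<in> C_prod \<Longrightarrow> L w \<in> D \<Longrightarrow> G y \<bullet> (w - y) \<ge> 0"
      unfolding VI_sol_def feas_def prod_set_def by auto
    obtain x u where "(x, u) \<in> kkt_points G" using assms(2) by auto
    then have CQ: "\<And>d. (\<And>w e. w \<in> C_prod \<Longrightarrow> e \<in> D \<Longrightarrow> d \<bullet> (L w - e) \<le> 0) \<Longrightarrow> d = 0"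
      using kkt_constraint_qualification[OF assms(1)] by blast
    obtain v where "\<And>c. c \<in> C_prod \<Longrightarrow> (G y + adjoint L v) \<bullet> (c - y) \<ge> 0"
        "\<And>e. e \<in> D \<Longrightarrow> (e - L y) \<bullet> v \<le> 0"
      using VI_multiplier[OF L C_prod_nonempty_closed_convex(3) D(3) y CQ] by blast
    with y(1,2) have "(y, v) \<in> kkt_points G" unfolding kkt_points_def by blast
    then show "y \<in> fst ` kkt_points G" by force
  qed
qed (rule fst_kkt_points_subset)

end

lemma lipschitz_bound_imp_continuous_on:
  fixes g :: "'a::real_normed_vector \<Rightarrow> 'b::real_normed_vector"
  assumes "\<And>x y. norm (g x - g y) \<le> K * norm (x - y)"
  shows "continuous_on UNIV g"
proof (rule lipschitz_on_continuous_on[where L = "max K 0"], rule lipschitz_onI)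
  show "dist (g x) (g y) \<le> max K 0 * dist x y" for x y
    using assms[of x y] mult_right_mono[of K "max K 0" "norm (x - y)"] by (simp add: dist_norm)
qed simp

lemma continuous_on_lift_fst:
  assumes "continuous_on UNIV g"
  shows "continuous_on UNIV (\<lambda>z. (g (fst z), 0))"
proof (rule continuous_on_Pair)
  show "continuous_on UNIV (\<lambda>z. g (fst z))"
    using assms by (rule continuous_on_compose2[OF _ continuous_on_fst[OF continuous_on_id]]) simp
qed (rule continuous_on_const)

lemma inner_diff_lift_fst:
  "((g (fst z), 0) - (g (fst z'), 0)) \<bullet> (z - z') = (g (fst z) - g (fst z')) \<bullet> (fst z - fst z')"
  by (cases z, cases z') simp

lemma VI_sol_lift_fst_subset:
  assumes "fst ` Z = V"
  shows "fst ` VI_sol (\<lambda>z. (g (fst z), 0)) Z \<subseteq> VI_sol g V"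
proof clarify
  fix x u assume xu: "(x, u) \<in> VI_sol (\<lambda>z. (g (fst z), 0)) Z"
  have "g x \<bullet> (y - x) \<ge> 0" if y: "y \<in> V" for y
  proof -
    obtain v where "(y, v) \<in> Z" using y assms by force
    then show ?thesis using xu unfolding VI_sol_def by fastforce
  qed
  moreover have "x \<in> V" using xu assms unfolding VI_sol_def by force
  ultimately show "fst (x, u) \<in> VI_sol g V" unfolding VI_sol_def by simp
qed

lemma infdist_fst_le:
  assumes "fst ` S \<subseteq> T" "S \<noteq> {}"
  shows "infdist (fst z) T \<le> infdist z S"
proof -
  have "infdist (fst z) T \<le> dist z s" if "s \<in> S" for s
    using infdist_le[of "fst s" T "fst z"] dist_fst_le[of z s] assms(1) that by force
  then show ?thesis unfolding infdist_def[of z S] using assms(2) by (simp add: cINF_greatest)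
qed

theorem theorem1:
  fixes m :: nat
    and P :: "nat \<Rightarrow> 'a::euclidean_space \<Rightarrow> 'a"
    and C :: "nat \<Rightarrow> 'a set"
    and D :: "'g::euclidean_space set"
    and L :: "'a \<Rightarrow> 'g"
    and f fu :: "nat \<Rightarrow> 'a \<Rightarrow> real"
    and \<kappa> \<gamma> \<alpha> :: real
    and lam :: "nat \<Rightarrow> real"
    and \<xi> :: "nat \<Rightarrow> 'a \<times> 'g"
  defines "G \<equiv> pseudo_grad m P f"
    and "Gu \<equiv> pseudo_grad m P fu"
    and "V \<equiv> VI_sol (pseudo_grad m P f) (feas m P C L D)"
  defines "Vu \<equiv> VI_sol (pseudo_grad m P fu) V"
    and "Ta \<equiv> T_alpha \<alpha> (T_FBF \<gamma> (opA (pseudo_grad m P f) L) (opB m P C D))"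
  assumes decomp: "orth_decomp m P"
    and C: "\<forall>i\<in>{1..m}. C i \<subseteq> range (P i) \<and> C i \<noteq> {} \<and> closed (C i) \<and> convex (C i)"
    and D: "D \<noteq> {}" "closed D" "convex D"
    and L: "linear L"
    and f_convex: "\<forall>i\<in>{1..m}. \<forall>x. convex_on (range (P i)) (\<lambda>y. f i (repl (P i) x y))"
    and f_diff: "\<forall>i\<in>{1..m}. \<forall>x. \<forall>y\<in>range (P i).
                   (\<lambda>z. f i (repl (P i) x z)) differentiable (at y within range (P i))"
    and G_mono: "\<forall>x y. (G x - G y) \<bullet> (x - y) \<ge> 0"
    and G_lip: "\<kappa> > 0" "\<forall>x y. norm (G x - G y) \<le> \<kappa> * norm (x - y)"
    and V_ne: "V \<noteq> {}"
    and fu_convex: "\<forall>i\<in>{1..m}. \<forall>x. convex_on (range (P i)) (\<lambda>y. fu i (repl (P i) x y))"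
    and fu_diff: "\<forall>i\<in>{1..m}. \<forall>x. \<forall>y\<in>range (P i).
                   (\<lambda>z. fu i (repl (P i) x z)) differentiable (at y within range (P i))"
    and gamma: "0 < \<gamma>" "\<gamma> < 1 / (\<kappa> + onorm L)"
    and alpha: "0 < \<alpha>" "\<alpha> < 1"
    and lam: "\<forall>n. lam n \<ge> 0" "lam \<longlonglongrightarrow> 0" "\<not> summable lam"
    and iter: "\<forall>n. \<xi> (Suc n) = Ta (\<xi> n) - lam (Suc n) *\<^sub>R (Gu (fst (Ta (\<xi> n))), 0)"
    and Gu_lip: "\<exists>K. \<forall>x y. norm (Gu x - Gu y) \<le> K * norm (x - y)"
    and Gu_mono: "\<forall>x y. (Gu x - Gu y) \<bullet> (x - y) \<ge> 0"
    and Gu_para: "\<forall>x y. (Gu x - Gu y) \<bullet> (x - y) = 0 \<longleftrightarrow> Gu x = Gu y"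
    and Fix_bdd: "bounded {z. Ta z = z}"
    and xi_bdd: "bounded (range \<xi>)"
  shows "Vu \<noteq> {} \<and> (\<lambda>n. infdist (fst (\<xi> n)) Vu) \<longlonglongrightarrow> 0"
proof -
  interpret game: constrained_game m P C D L using decomp C D L by (rule constrained_game.intro)
  have splitting: "fbf_splitting (opA G L) (opB m P C D) \<gamma> (\<kappa> + onorm L)"
    using G_mono G_lip gamma by (intro game.fbf_splitting_opA_opB) auto
  interpret fbf_splitting "opA G L" "opB m P C D" \<gamma> "\<kappa> + onorm L" by (rule splitting)
  have Ta: "Ta = T_alpha \<alpha> (T_FBF \<gamma> (opA G L) (opB m P C D))" by (simp add: Ta_def G_def)
  have "bounded zeros" using Fix_bdd T_alpha_fixed_iff[of \<alpha>] alpha unfolding Ta by simp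
  obtain KG where "\<And>x y. norm (Gu x - Gu y) \<le> KG * norm (x - y)" using Gu_lip by blast
  then have "continuous_on UNIV (\<lambda>z::'a \<times> 'g. (Gu (fst z), 0::'g))"
    by (intro continuous_on_lift_fst lipschitz_bound_imp_continuous_on)
  with \<open>bounded zeros\<close> interpret bilevel: fbf_bilevel "opA G L" "opB m P C D" \<gamma> "\<kappa> + onorm L" \<alpha>
      "\<lambda>z. (Gu (fst z), 0)" lam \<xi>
    using alpha lam iter xi_bdd Gu_mono Gu_para unfolding Ta
    by unfold_locales (auto simp: inner_diff_lift_fst)
  have "fst ` zeros = V"
    using game.fst_kkt_points_eq \<open>bounded zeros\<close> bilevel.zeros_nonempty
    unfolding game.zeros_opA_opB[OF splitting] V_def G_def[symmetric] by simp
  then have "fst ` bilevel.upper_sol \<subseteq> Vu"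
    unfolding bilevel.upper_sol_def Vu_def Gu_def[symmetric] by (rule VI_sol_lift_fst_subset)
  then have "Vu \<noteq> {}" and le: "\<And>n. infdist (fst (\<xi> n)) Vu \<le> infdist (\<xi> n) bilevel.upper_sol"
    using bilevel.upper_sol_nonempty infdist_fst_le by blast+
  moreover have "(\<lambda>n. infdist (fst (\<xi> n)) Vu) \<longlonglongrightarrow> 0"
    by (rule Lim_null_comparison[OF _ bilevel.tendsto_infdist_upper_sol]) (simp add: le infdist_nonneg)
  ultimately show ?thesis by blast
qed

end
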